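(* Let $\mathcal{G}$ be an $A$-compatible P-graph with associated map $\mu$ satisfying condition ( * ): for every $\ell'\in\{1,\dots,m\}$ and $i\in\{1,\dots,d\}$, every directed path from $j_i$ to $\ell'$ that contains an edge in $\mathcal{E}^-$ goes through $m+1$. Let $k\in\{1,\dots,d+1\}$, $\widetilde B\in\mathcal{B}^k$, $\ell\in\{1,\dots,m+1\}\setminus\widetilde B$, $B=\widetilde B\cup\{\ell\}$. Then for every $\zeta\in\Lambda_\mathcal{G}(F,B)$, \[\psi_F^{-1}(\zeta)=\Big\{E\cup(\zeta\cap\mathcal{E}^+) \;:\; E\in\underset{e\in\zeta\cap\mathcal{E}^-}{\odot}\big(\{e\}\cup\mu(e)\big)\Big\}.\]
   Context: $R$ is a partially ordered commutative ring. Let $d\ge0$, $m_0,\dots,m_d\ge0$ with $m=m_0+\cdots+m_d$. $A\in R^{m\times m}$, $b\in R^m$: for $i=1,\dots,d$ the rows indexed by $\mathcal{N}_i=\{1+\sum_{j<i}m_j,\dots,\sum_{j\le i}m_j\}$ are zero outside the columns indexed by $\mathcal{N}_i$, where they form a square $A_i$, and the corresponding subvector $b^i$ has at most one nonzero entry; the last $m_0$ rows form an arbitrary $A_0\in R^{m_0\times m}$ with arbitrary $b^0$. $\mathcal{N}=\{1,\dots,m+1\}$, $\mathcal{N}_0=\{m-m_0+1,\dots,m+1\}$, $\mathcal{N}_{d+1}=\{m+1\}$. Fixed $j_i\in\mathcal{N}_i$ with $b_j=0$ for all $j\le m-m_0$, $j\notin\{j_1,\dots,j_d\}$; $F=\{j_1,\dots,j_d,m+1\}$.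 For pairwise disjoint finite sets, $S_1\odot\cdots\odot S_k=\{\{w_1,\dots,w_k\}:w_j\in S_j\}$; $\mathcal{B}^k=\odot_{j\in\{1,\dots,d+1\}\setminus\{k\}}\mathcal{N}_j$. A multidigraph $\mathcal{G}=(\mathcal{N},\mathcal{E})$ has source/target maps $s,t$, no self-loops, labeling $\pi\colon\mathcal{E}\to R$, Laplacian $L_{ij}=\sum_{e:s(e)=j,t(e)=i}\pi(e)$ ($i\ne j$), $L_{ii}=-\sum_{k\ne i}L_{ki}$. $\mathcal{G}$ is $A$-compatible if (i) no edge goes from a node in $\mathcal{N}_i$ ($i\ge0$) to a node in $\mathcal{N}_j$ with $i\ne j$, $j\ge1$; (ii) for $\ell\notin F$ the $\ell$-th row of $L$ equals the $\ell$-th row of $(A\,|\,b)$. Trees/forests: subgraphs with acyclic underlying undirected graph (connected for trees), rooted at $N$ if $N$ is the only node without outgoing edges; spanning means node set $\mathcal{N}$; forests are identified with edge sets. $\Theta_\mathcal{G}(F,B)$ ($|F|=|B|$): spanning forests with $|B|$ components, each containing a node of $F$ and being a tree rooted at a node of $B$. A cycle is a closed directed path with no repeated nodes. $\mathcal{E}^-=\{e:\pi(e)\in R_{<0}\}$, $\mathcal{E}^+=\{e:\pi(e)\in R_{>0}\}$. $\mathcal{G}$ is a P-graph with associated map $\mu\colon\mathcal{E}^-\to\mathcal{P}(\mathcal{E}^+)$ if (i) $\mathcal{E}=\mathcal{E}^+\sqcup\mathcal{E}^-$; (ii) every cycle contains at most one edge of $\mathcal{E}^-$; (iii) for $e\in\mathcal{E}^-$: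 (a) $e'\in\mu(e)\Rightarrow s(e')=s(e)$; (b) $e'\in\mu(e)\Rightarrow$ every cycle containing $e'$ contains $t(e)$; (c) $\mu(e)\cap\mu(e')=\emptyset$ for $e\ne e'$; (iv) $\pi(e)+\sum_{e'\in\mu(e)}\pi(e')\in R_{\ge0}$ for all $e\in\mathcal{E}^-$. $\operatorname{im}\mu=\bigcup_e\mu(e)$, $\mu^*\colon\operatorname{im}\mu\to\mathcal{E}^-$, $\mu^*(e')=e$ if $e'\in\mu(e)$. For $\zeta\in\Theta_\mathcal{G}(F,B)$, $\mathcal{E}^F_\zeta=\{E\subseteq\zeta\cap\operatorname{im}\mu:(\zeta\setminus E)\cup\mu^*(E)\in\Theta_\mathcal{G}(F,B)\}$; this family is closed under union and $E^F_\zeta$ denotes its maximum (union of its members). $\Lambda_\mathcal{G}(F,B)=\{\zeta\in\Theta_\mathcal{G}(F,B):\mathcal{E}^F_\zeta=\{\emptyset\}\}$, and $\psi_F\colon\Theta_\mathcal{G}(F,B)\to\Lambda_\mathcal{G}(F,B)$, $\psi_F(\zeta)=(\zeta\setminus E^F_\zeta)\cup\mu^*(E^F_\zeta)$. *)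

theory Defs
  imports Main
begin

definition mtot :: "(nat \<Rightarrow> nat) \<Rightarrow> nat \<Rightarrow> nat" where
  "mtot ms d = (\<Sum>j\<le>d. ms j)"

definition Nblk :: "(nat \<Rightarrow> nat) \<Rightarrow> nat \<Rightarrow> nat \<Rightarrow> nat set" where
  "Nblk ms d i =
     (if i = 0 then {mtot ms d - ms 0 + 1 .. mtot ms d + 1}
      else if i \<le> d then {1 + (\<Sum>j\<in>{1..<i}. ms j) .. (\<Sum>j\<in>{1..i}. ms j)}
      else if i = d + 1 then {mtot ms d + 1}
      else {})"

definition odot :: "'i set \<Rightarrow> ('i \<Rightarrow> 'a set) \<Rightarrow> 'a set set" where
  "odot I S = {f ` I | f. \<forall>i\<in>I. f i \<in> S i}"

definition lap :: "'e set \<Rightarrow> ('e \<Rightarrow> nat) \<Rightarrow> ('e \<Rightarrow> nat) \<Rightarrow> ('e \<Rightarrow> 'r::comm_ring)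
                    \<Rightarrow> nat set \<Rightarrow> nat \<Rightarrow> nat \<Rightarrow> 'r" where
  "lap E s t \<pi> N i j =
     (if i \<noteq> j then (\<Sum>e\<in>{e\<in>E. s e = j \<and> t e = i}. \<pi> e)
      else - (\<Sum>k\<in>N - {i}. (\<Sum>e\<in>{e\<in>E. s e = i \<and> t e = k}. \<pi> e)))"

definition ucycle :: "('e \<Rightarrow> nat) \<Rightarrow> ('e \<Rightarrow> nat) \<Rightarrow> 'e set \<Rightarrow> 'e list \<Rightarrow> nat list \<Rightarrow> bool" where
  "ucycle s t Z es vs \<longleftrightarrow>
     es \<noteq> [] \<and> length vs = length es + 1 \<and> distinct es \<and> set es \<subseteq> Z \<and>
     hd vs = last vs \<and> distinct (tl vs) \<and>
     (\<forall>i<length es. {s (es ! i), t (es ! i)} = {vs ! i, vs ! Suc i})"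

definition forest :: "('e \<Rightarrow> nat) \<Rightarrow> ('e \<Rightarrow> nat) \<Rightarrow> 'e set \<Rightarrow> bool" where
  "forest s t Z \<longleftrightarrow> \<not> (\<exists>es vs. ucycle s t Z es vs)"

definition uedges :: "('e \<Rightarrow> nat) \<Rightarrow> ('e \<Rightarrow> nat) \<Rightarrow> 'e set \<Rightarrow> (nat \<times> nat) set" where
  "uedges s t Z = {(s e, t e) | e. e \<in> Z} \<union> {(t e, s e) | e. e \<in> Z}"

definition ucomp :: "('e \<Rightarrow> nat) \<Rightarrow> ('e \<Rightarrow> nat) \<Rightarrow> 'e set \<Rightarrow> nat set \<Rightarrow> nat \<Rightarrow> nat set" where
  "ucomp s t Z N x = {y \<in> N. (x, y) \<in> (uedges s t Z)\<^sup>*}"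

definition comps :: "('e \<Rightarrow> nat) \<Rightarrow> ('e \<Rightarrow> nat) \<Rightarrow> 'e set \<Rightarrow> nat set \<Rightarrow> nat set set" where
  "comps s t Z N = ucomp s t Z N ` N"

(* Theta_G(F,B): spanning forests (edge sets) with |B| components, each containing a node of F
   and being a tree rooted at a node of B (the root is the only node of the component
   without outgoing edges) *)
definition Theta :: "'e set \<Rightarrow> ('e \<Rightarrow> nat) \<Rightarrow> ('e \<Rightarrow> nat) \<Rightarrow> nat set \<Rightarrow> nat set \<Rightarrow> nat set \<Rightarrow> 'e set set" where
  "Theta E s t N F B =
     {Z. Z \<subseteq> E \<and> forest s t Z \<and> card (comps s t Z N) = card B \<and>
         (\<forall>C\<in>comps s t Z N. C \<inter> F \<noteq> {} \<and>
            (\<exists>r\<in>B \<inter> C. \<forall>v\<in>C. (\<not> (\<exists>e\<in>Z. s e = v)) \<longleftrightarrow> v = r))}"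

definition dcycle :: "('e \<Rightarrow> nat) \<Rightarrow> ('e \<Rightarrow> nat) \<Rightarrow> 'e list \<Rightarrow> bool" where
  "dcycle s t es \<longleftrightarrow> es \<noteq> [] \<and>
     (\<forall>i. Suc i < length es \<longrightarrow> t (es ! i) = s (es ! Suc i)) \<and>
     t (last es) = s (hd es) \<and> distinct (map s es)"

definition dpath :: "('e \<Rightarrow> nat) \<Rightarrow> ('e \<Rightarrow> nat) \<Rightarrow> 'e list \<Rightarrow> nat \<Rightarrow> nat \<Rightarrow> bool" where
  "dpath s t es u v \<longleftrightarrow> es \<noteq> [] \<and>
     (\<forall>i. Suc i < length es \<longrightarrow> t (es ! i) = s (es ! Suc i)) \<and>
     s (hd es) = u \<and> t (last es) = v \<and> distinct (u # map t es)"

definition pathnodes :: "('e \<Rightarrow> nat) \<Rightarrow> ('e \<Rightarrow> nat) \<Rightarrow> 'e list \<Rightarrow> nat set" where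
  "pathnodes s t es = set (map s es) \<union> set (map t es)"

definition Eneg :: "'e set \<Rightarrow> ('e \<Rightarrow> 'r::ordered_comm_ring) \<Rightarrow> 'e set" where
  "Eneg E \<pi> = {e \<in> E. \<pi> e < 0}"

definition Epos :: "'e set \<Rightarrow> ('e \<Rightarrow> 'r::ordered_comm_ring) \<Rightarrow> 'e set" where
  "Epos E \<pi> = {e \<in> E. \<pi> e > 0}"

definition Pgraph :: "'e set \<Rightarrow> ('e \<Rightarrow> nat) \<Rightarrow> ('e \<Rightarrow> nat) \<Rightarrow> ('e \<Rightarrow> 'r::ordered_comm_ring)
                       \<Rightarrow> ('e \<Rightarrow> 'e set) \<Rightarrow> bool" where
  "Pgraph E s t \<pi> \<mu> \<longleftrightarrow>
     E = Epos E \<pi> \<union> Eneg E \<pi> \<and>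
     (\<forall>es. dcycle s t es \<and> set es \<subseteq> E \<longrightarrow> card (set es \<inter> Eneg E \<pi>) \<le> 1) \<and>
     (\<forall>e\<in>Eneg E \<pi>. \<mu> e \<subseteq> Epos E \<pi> \<and>
        (\<forall>e'\<in>\<mu> e. s e' = s e) \<and>
        (\<forall>e'\<in>\<mu> e. \<forall>es. dcycle s t es \<and> set es \<subseteq> E \<and> e' \<in> set es
                      \<longrightarrow> t e \<in> set (map s es)) \<and>
        (\<forall>e2\<in>Eneg E \<pi>. e \<noteq> e2 \<longrightarrow> \<mu> e \<inter> \<mu> e2 = {}) \<and>
        \<pi> e + (\<Sum>e'\<in>\<mu> e. \<pi> e') \<ge> 0)"

definition immu :: "'e set \<Rightarrow> ('e \<Rightarrow> 'r::ordered_comm_ring) \<Rightarrow> ('e \<Rightarrow> 'e set) \<Rightarrow> 'e set" where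
  "immu E \<pi> \<mu> = (\<Union>e\<in>Eneg E \<pi>. \<mu> e)"

definition mustar :: "'e set \<Rightarrow> ('e \<Rightarrow> 'r::ordered_comm_ring) \<Rightarrow> ('e \<Rightarrow> 'e set) \<Rightarrow> 'e \<Rightarrow> 'e" where
  "mustar E \<pi> \<mu> e' = (THE e. e \<in> Eneg E \<pi> \<and> e' \<in> \<mu> e)"

definition EFfam :: "'e set \<Rightarrow> ('e \<Rightarrow> nat) \<Rightarrow> ('e \<Rightarrow> nat) \<Rightarrow> ('e \<Rightarrow> 'r::ordered_comm_ring)
                      \<Rightarrow> ('e \<Rightarrow> 'e set) \<Rightarrow> nat set \<Rightarrow> nat set \<Rightarrow> nat set \<Rightarrow> 'e set \<Rightarrow> 'e set set" where
  "EFfam E s t \<pi> \<mu> N F B Z =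
     {X. X \<subseteq> Z \<inter> immu E \<pi> \<mu> \<and> (Z - X) \<union> mustar E \<pi> \<mu> ` X \<in> Theta E s t N F B}"

definition EFmax :: "'e set \<Rightarrow> ('e \<Rightarrow> nat) \<Rightarrow> ('e \<Rightarrow> nat) \<Rightarrow> ('e \<Rightarrow> 'r::ordered_comm_ring)
                      \<Rightarrow> ('e \<Rightarrow> 'e set) \<Rightarrow> nat set \<Rightarrow> nat set \<Rightarrow> nat set \<Rightarrow> 'e set \<Rightarrow> 'e set" where
  "EFmax E s t \<pi> \<mu> N F B Z = \<Union> (EFfam E s t \<pi> \<mu> N F B Z)"

definition Lambda :: "'e set \<Rightarrow> ('e \<Rightarrow> nat) \<Rightarrow> ('e \<Rightarrow> nat) \<Rightarrow> ('e \<Rightarrow> 'r::ordered_comm_ring)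
                       \<Rightarrow> ('e \<Rightarrow> 'e set) \<Rightarrow> nat set \<Rightarrow> nat set \<Rightarrow> nat set \<Rightarrow> 'e set set" where
  "Lambda E s t \<pi> \<mu> N F B = {Z \<in> Theta E s t N F B. EFfam E s t \<pi> \<mu> N F B Z = {{}}}"

definition psiF :: "'e set \<Rightarrow> ('e \<Rightarrow> nat) \<Rightarrow> ('e \<Rightarrow> nat) \<Rightarrow> ('e \<Rightarrow> 'r::ordered_comm_ring)
                     \<Rightarrow> ('e \<Rightarrow> 'e set) \<Rightarrow> nat set \<Rightarrow> nat set \<Rightarrow> nat set \<Rightarrow> 'e set \<Rightarrow> 'e set" where
  "psiF E s t \<pi> \<mu> N F B Z =
     (Z - EFmax E s t \<pi> \<mu> N F B Z) \<union> mustar E \<pi> \<mu> ` EFmax E s t \<pi> \<mu> N F B Z"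

end

theory Submission
  imports Defs "HOL-Library.Transitive_Closure_Table"
begin

lemma rtrancl_path_successively:
  "rtrancl_path r x ys y \<Longrightarrow> successively r (x # ys) \<and> last (x # ys) = y"
  by (induction rule: rtrancl_path.induct) (auto simp: successively_Cons)

lemma rtrancl_imp_distinct_walk:
  assumes "(u, w) \<in> R\<^sup>*"
  obtains xs where "xs \<noteq> []" "hd xs = u" "last xs = w" "distinct xs"
    "successively (\<lambda>x y. (x, y) \<in> R) xs"
proof -
  have "(\<lambda>x y. (x, y) \<in> R)\<^sup>*\<^sup>* u w" using assms by (simp add: rtranclp_rtrancl_eq)
  then obtain ys where "rtrancl_path (\<lambda>x y. (x, y) \<in> R) u ys w"
    by (auto simp: rtranclp_eq_rtrancl_path)
  then obtain ys' where ys': "rtrancl_path (\<lambda>x y. (x, y) \<in> R) u ys' w" "distinct (u # ys')"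
    by (rule rtrancl_path_distinct)
  show thesis
    using that[of "u # ys'"] ys' rtrancl_path_successively[OF ys'(1)] by simp
qed
lemma successively_rtrancl:
  assumes "successively (\<lambda>x y. (x, y) \<in> R) xs" "i \<le> j" "j < length xs"
  shows "(xs ! i, xs ! j) \<in> R\<^sup>*"
  using assms(2,3)
proof (induction j)
  case (Suc j)
  show ?case
  proof (cases "i = Suc j")
    case False
    then have "(xs ! i, xs ! j) \<in> R\<^sup>*" using Suc by simp
    moreover have "(xs ! j, xs ! Suc j) \<in> R" using successively_nth[OF assms(1)] Suc.prems(2) .
    ultimately show ?thesis by (rule rtrancl_into_rtrancl)
  qed simp
qed simp

lemma finite_acyclic_minimal:
  assumes "finite R" "acyclic R" "v \<in> V"
  obtains w where "w \<in> V" "\<forall>u\<in>V. (w, u) \<notin> R"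
proof -
  have "wf (R\<inverse>)" using finite_acyclic_wf_converse[OF assms(1,2)] .
  then obtain w where "w \<in> V" "\<And>y. (y, w) \<in> R\<inverse> \<Longrightarrow> y \<notin> V"
    using wfE_min[OF _ assms(3)] by metis
  then show thesis using that by blast
qed

lemma finite_acyclic_reach_sink:
  assumes "finite R" "acyclic R"
  obtains w where "(u, w) \<in> R\<^sup>*" "\<forall>z. (w, z) \<notin> R"
proof -
  obtain w where w: "w \<in> {w. (u, w) \<in> R\<^sup>*}" "\<forall>z\<in>{w. (u, w) \<in> R\<^sup>*}. (w, z) \<notin> R"
    using finite_acyclic_minimal[OF assms, of u "{w. (u, w) \<in> R\<^sup>*}"] by blast
  show thesis
  proof (rule that)
    show "(u, w) \<in> R\<^sup>*" using w(1) by simp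
    show "\<forall>z. (w, z) \<notin> R"
    proof (intro allI notI)
      fix z assume "(w, z) \<in> R"
      moreover from this have "(u, z) \<in> R\<^sup>*" using w(1) by simp
      ultimately show False using w(2) by blast
    qed
  qed
qed

lemma single_valued_sink_unique:
  assumes "single_valued R" "(u, w1) \<in> R\<^sup>*" "(u, w2) \<in> R\<^sup>*"
    "\<forall>z. (w1, z) \<notin> R" "\<forall>z. (w2, z) \<notin> R"
  shows "w1 = w2"
  using single_valued_confluent[OF assms(1-3)] assms(4,5) by (metis converse_rtranclE)

definition dedges :: "('e \<Rightarrow> nat) \<Rightarrow> ('e \<Rightarrow> nat) \<Rightarrow> 'e set \<Rightarrow> (nat \<times> nat) set" where
  "dedges s t Z = (\<lambda>e. (s e, t e)) ` Z"

lemma dedges_iff: "(a, b) \<in> dedges s t Z \<longleftrightarrow> (\<exists>e\<in>Z. s e = a \<and> t e = b)"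
  unfolding dedges_def by blast

lemma dedges_mono: "Z \<subseteq> Z' \<Longrightarrow> dedges s t Z \<subseteq> dedges s t Z'"
  unfolding dedges_def by blast

lemma finite_dedges: "finite Z \<Longrightarrow> finite (dedges s t Z)"
  unfolding dedges_def by simp

lemma no_edge_from_iff: "(\<not> (\<exists>e\<in>Z. s e = v)) \<longleftrightarrow> v \<notin> s ` Z"
  by blast

lemma dedges_no_successor_iff: "(\<forall>z. (w, z) \<notin> dedges s t Z) \<longleftrightarrow> w \<notin> s ` Z"
  unfolding dedges_def by blast

lemma single_valued_dedges: "inj_on s Z \<Longrightarrow> single_valued (dedges s t Z)"
  unfolding single_valued_def dedges_def inj_on_def by blast

lemma uedges_iff:
  "(a, b) \<in> uedges s t Z \<longleftrightarrow> (\<exists>e\<in>Z. {s e, t e} = {a, b})"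
  unfolding uedges_def doubleton_eq_iff by blast

lemma dedges_subset_uedges: "dedges s t Z \<subseteq> uedges s t Z"
  unfolding dedges_def uedges_def by blast

lemma rtrancl_dedges_imp_uedges: "(x, y) \<in> (dedges s t Z)\<^sup>* \<Longrightarrow> (x, y) \<in> (uedges s t Z)\<^sup>*"
  by (rule subsetD[OF rtrancl_mono[OF dedges_subset_uedges]])

lemma rtrancl_uedges_sym: "(a, b) \<in> (uedges s t Z)\<^sup>* \<Longrightarrow> (b, a) \<in> (uedges s t Z)\<^sup>*"
proof -
  have "sym ((uedges s t Z)\<^sup>*)" by (rule sym_rtrancl) (auto simp: sym_def uedges_iff insert_commute)
  then show "(a, b) \<in> (uedges s t Z)\<^sup>* \<Longrightarrow> (b, a) \<in> (uedges s t Z)\<^sup>*" by (rule symD)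
qed

lemma rtrancl_dedges_avoid_source:
  assumes "(y, x) \<in> (dedges s t Z)\<^sup>*" "s e = x"
  shows "(y, x) \<in> (dedges s t (Z - {e}))\<^sup>*"
  using assms(1)
proof (induction rule: converse_rtrancl_induct)
  case (step y z)
  show ?case
  proof (cases "y = x")
    case False
    then have "(y, z) \<in> dedges s t (Z - {e})"
      using step.hyps(1) assms(2) unfolding dedges_iff by blast
    then show ?thesis using step.IH by (rule converse_rtrancl_into_rtrancl)
  qed simp
qed simp

lemma walk_edges:
  assumes "successively (\<lambda>x y. (x, y) \<in> dedges s t T) xs"
  shows "\<exists>es. set es \<subseteq> T \<and> map s es = butlast xs \<and> map t es = tl xs"
  using assms
proof (induction "\<lambda>x y. (x, y) \<in> dedges s t T" xs rule: successively.induct)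
  case (3 x y xs)
  then obtain es e where "set es \<subseteq> T" "map s es = butlast (y # xs)" "map t es = xs"
    "e \<in> T" "s e = x" "t e = y"
    unfolding dedges_iff by auto
  then show ?case by (intro exI[of _ "e # es"]) simp
qed (rule exI[of _ "[]"], simp)+

lemma walk_edges_consecutive:
  assumes "map s es = butlast xs" "map t es = tl xs" "Suc i < length es"
  shows "t (es ! i) = s (es ! Suc i)"
proof -
  have "t (es ! i) = tl xs ! i"
    using assms(2,3) by (metis Suc_lessD nth_map)
  also have "\<dots> = butlast xs ! Suc i"
    using arg_cong[OF assms(1), of length] assms(3) by (simp add: nth_tl nth_butlast)
  also have "\<dots> = s (es ! Suc i)"
    using assms(1,3) by (metis nth_map)
  finally show ?thesis .
qed

lemma trancl_dedges_imp_dcycle: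
  assumes "(x, x) \<in> (dedges s t T)\<^sup>+"
  obtains es where "dcycle s t es" "set es \<subseteq> T"
proof -
  obtain y where xy: "(x, y) \<in> dedges s t T" "(y, x) \<in> (dedges s t T)\<^sup>*"
    using assms by (meson tranclD)
  obtain ys where ys: "ys \<noteq> []" "hd ys = y" "last ys = x" "distinct ys"
    "successively (\<lambda>a b. (a, b) \<in> dedges s t T) ys"
    using rtrancl_imp_distinct_walk[OF xy(2)] by blast
  have walk: "successively (\<lambda>a b. (a, b) \<in> dedges s t T) (x # ys)"
    using ys(1,2,5) xy(1) by (cases ys) auto
  obtain es where es: "set es \<subseteq> T" "map s es = butlast (x # ys)" "map t es = tl (x # ys)"
    using walk_edges[OF walk] by blast
  have ne: "es \<noteq> []" using es(3) ys(1) by auto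
  have "dcycle s t es"
    unfolding dcycle_def
  proof (intro conjI allI impI)
    show "t (es ! i) = s (es ! Suc i)" if "Suc i < length es" for i
      using walk_edges_consecutive[OF es(2,3) that] .
    have "t (last es) = last ys" using es(3) ne by (metis last_map list.sel(3))
    moreover have "s (hd es) = x" using es(2) ne ys(1) by (metis butlast.simps(2) hd_map list.sel(1))
    ultimately show "t (last es) = s (hd es)" using ys(3) by simp
    have "last ys \<notin> set (butlast ys)"
      using ys(1,4) by (metis append_butlast_last_id distinct_append disjoint_iff list.set_intros(1))
    then show "distinct (map s es)" using es(2) ys by (simp add: distinct_butlast)
  qed (use ne in simp)
  then show thesis using that es(1) by blast
qed

lemma dcycle_not_acyclic:
  assumes "dcycle s t es" "set es \<subseteq> T"
  shows "\<not> acyclic (dedges s t T)"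
proof -
  have cons: "\<forall>i. Suc i < length es \<longrightarrow> t (es ! i) = s (es ! Suc i)"
    and ne: "es \<noteq> []" and closed: "t (last es) = s (hd es)"
    using assms(1) unfolding dcycle_def by auto
  have edge: "(s (es ! i), t (es ! i)) \<in> dedges s t T" if "i < length es" for i
    using assms(2) that nth_mem unfolding dedges_iff by blast
  have "(s (hd es), t (es ! i)) \<in> (dedges s t T)\<^sup>+" if "i < length es" for i
    using that
  proof (induction i)
    case 0
    then show ?case using edge[of 0] ne by (simp add: hd_conv_nth)
  next
    case (Suc i)
    then show ?case using edge[OF Suc.prems] cons by (metis Suc_lessD trancl_into_trancl)
  qed
  then have "(s (hd es), s (hd es)) \<in> (dedges s t T)\<^sup>+"
    using ne closed by (metis diff_less last_conv_nth length_greater_0_conv zero_less_one)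
  then show ?thesis unfolding acyclic_def by blast
qed

lemma dcycle_target_is_source:
  assumes "dcycle s t es" "e \<in> set es"
  shows "t e \<in> s ` set es"
proof -
  obtain i where i: "i < length es" "es ! i = e" using assms(2) by (metis in_set_conv_nth)
  have "es \<noteq> []" "t (last es) = s (hd es)"
    and cons: "\<forall>i. Suc i < length es \<longrightarrow> t (es ! i) = s (es ! Suc i)"
    using assms(1) unfolding dcycle_def by auto
  show ?thesis
  proof (cases "Suc i < length es")
    case True
    then show ?thesis using cons i by (metis image_eqI nth_mem)
  next
    case False
    then have "i = length es - 1" using i(1) by simp
    then have "e = last es" using i \<open>es \<noteq> []\<close> by (simp add: last_conv_nth)
    then show ?thesis using \<open>t (last es) = s (hd es)\<close> \<open>es \<noteq> []\<close> by simp
  qed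
qed

lemma dpath_through_edge:
  assumes acyclic: "acyclic (dedges s t T)" and uv: "(u, v) \<in> (dedges s t T)\<^sup>*"
    and e: "e \<in> T" "s e = v"
  obtains es where "set es \<subseteq> T" "dpath s t es u (t e)" "e \<in> set es"
    "\<And>y. y \<in> pathnodes s t es \<Longrightarrow> (u, y) \<in> (dedges s t T)\<^sup>* \<and> (y, t e) \<in> (dedges s t T)\<^sup>*"
proof -
  let ?R = "dedges s t T"
  obtain xs where xs: "xs \<noteq> []" "hd xs = u" "last xs = v" "distinct xs"
    "successively (\<lambda>a b. (a, b) \<in> ?R) xs"
    using rtrancl_imp_distinct_walk[OF uv] by blast
  obtain es0 where es0: "set es0 \<subseteq> T" "map s es0 = butlast xs" "map t es0 = tl xs"
    using walk_edges[OF xs(5)] by blast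
  have ve: "(v, t e) \<in> ?R" using e unfolding dedges_iff by blast
  have reach: "(u, y) \<in> ?R\<^sup>* \<and> (y, v) \<in> ?R\<^sup>*" if "y \<in> set xs" for y
  proof -
    obtain j where j: "j < length xs" "xs ! j = y"
      using \<open>y \<in> set xs\<close> by (auto simp: in_set_conv_nth)
    have "(xs ! 0, xs ! j) \<in> ?R\<^sup>*" "(xs ! j, xs ! (length xs - 1)) \<in> ?R\<^sup>*"
      using successively_rtrancl[OF xs(5)] j(1) by auto
    then show ?thesis using xs(1-3) j(2) by (simp add: hd_conv_nth last_conv_nth)
  qed
  have te: "t e \<notin> set xs"
  proof
    assume "t e \<in> set xs"
    then have "(v, v) \<in> ?R\<^sup>+" using reach ve by (meson rtrancl_into_trancl2)
    then show False using acyclic unfolding acyclic_def by blast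
  qed
  define es where "es = es0 @ [e]"
  have ne: "es \<noteq> []" unfolding es_def by simp
  have ms: "map s es = xs"
    using es0(2) xs(3) e(2) append_butlast_last_id[OF xs(1)] unfolding es_def by simp
  have mt: "map t es = tl xs @ [t e]" using es0(3) unfolding es_def by simp
  have dp: "dpath s t es u (t e)"
    unfolding dpath_def
  proof (intro conjI allI impI ne)
    show "t (es ! i) = s (es ! Suc i)" if "Suc i < length es" for i
      using walk_edges_consecutive[of s es "xs @ [t e]" t i] ms mt xs(1) that by simp
    show "s (hd es) = u" using ms xs(2) hd_map[OF ne, of s] by simp
    show "t (last es) = t e" unfolding es_def by simp
    have "u # map t es = xs @ [t e]" using mt xs(1,2) list.collapse[OF xs(1)] by simp
    then show "distinct (u # map t es)" using xs(4) te by simp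
  qed
  have nodes: "pathnodes s t es = insert (t e) (set xs)"
    using ms mt list.set_sel(2)[OF xs(1)] unfolding pathnodes_def by auto
  have sub: "set es \<subseteq> T" using es0(1) e(1) unfolding es_def by simp
  have between: "(u, y) \<in> ?R\<^sup>* \<and> (y, t e) \<in> ?R\<^sup>*" if "y \<in> insert (t e) (set xs)" for y
  proof (cases "y = t e")
    case True
    have "(u, v) \<in> ?R\<^sup>*" using reach[of v] last_in_set[OF xs(1)] xs(3) by simp
    then show ?thesis using True ve by simp
  next
    case False
    then show ?thesis using that reach[of y] ve rtrancl_into_rtrancl[of y v ?R "t e"] by simp
  qed
  show thesis
  proof (rule that[OF sub dp])
    show "e \<in> set es" unfolding es_def by simp
  qed (use nodes between in simp)
qed

section \<open>Forests\<close>

lemma uwalk_edges: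
  assumes "distinct xs" "successively (\<lambda>x y. (x, y) \<in> uedges s t Z) xs"
  shows "\<exists>es. length es = length xs - 1 \<and> distinct es \<and> set es \<subseteq> Z \<and>
           (\<forall>i<length es. {s (es ! i), t (es ! i)} = {xs ! i, xs ! Suc i})"
  using assms
proof (induction "\<lambda>x y. (x, y) \<in> uedges s t Z" xs rule: successively.induct)
  case (3 x y xs)
  then obtain es where es: "length es = length (y # xs) - 1" "distinct es" "set es \<subseteq> Z"
    "\<forall>i<length es. {s (es ! i), t (es ! i)} = {(y # xs) ! i, (y # xs) ! Suc i}"
    by auto
  obtain f where f: "f \<in> Z" "{s f, t f} = {x, y}" using "3.prems"(2) unfolding uedges_iff by auto
  have "f \<notin> set es"
  proof
    assume "f \<in> set es"
    then obtain i where "i < length es" "es ! i = f" by (metis in_set_conv_nth)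
    then have "x \<in> {(y # xs) ! i, (y # xs) ! Suc i}" using es(4) f(2) by auto
    moreover have "(y # xs) ! i \<in> set (y # xs)" "(y # xs) ! Suc i \<in> set (y # xs)"
      using \<open>i < length es\<close> es(1) by (intro nth_mem, simp)+
    ultimately have "x \<in> set (y # xs)" by blast
    then show False using "3.prems"(1) by simp
  qed
  then show ?case
    using es f by (intro exI[of _ "f # es"]) (auto simp: nth_Cons split: nat.split)
qed (rule exI[of _ "[]"], simp)+

lemma forest_no_bypass:
  assumes "forest s t Z" "e \<in> Z"
  shows "(t e, s e) \<notin> (uedges s t (Z - {e}))\<^sup>*"
proof
  assume "(t e, s e) \<in> (uedges s t (Z - {e}))\<^sup>*"
  then obtain xs where xs: "xs \<noteq> []" "hd xs = t e" "last xs = s e" "distinct xs"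
    "successively (\<lambda>x y. (x, y) \<in> uedges s t (Z - {e})) xs"
    by (rule rtrancl_imp_distinct_walk)
  obtain es where es: "length es = length xs - 1" "distinct es" "set es \<subseteq> Z - {e}"
    "\<forall>i<length es. {s (es ! i), t (es ! i)} = {xs ! i, xs ! Suc i}"
    using uwalk_edges[OF xs(4,5)] by blast
  have "ucycle s t Z (e # es) (s e # xs)"
    unfolding ucycle_def
  proof (intro conjI allI impI)
    show "length (s e # xs) = length (e # es) + 1" using es(1) xs(1) by simp
    show "distinct (e # es)" "set (e # es) \<subseteq> Z" using es(2,3) assms(2) by auto
    show "hd (s e # xs) = last (s e # xs)" using xs(1,3) by simp
    show "distinct (tl (s e # xs))" using xs(4) by simp
    show "{s ((e # es) ! i), t ((e # es) ! i)} = {(s e # xs) ! i, (s e # xs) ! Suc i}"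
      if "i < length (e # es)" for i
      using that es(4) xs(1,2) by (cases i) (auto simp: hd_conv_nth)
  qed simp
  then show False using assms(1) unfolding forest_def by blast
qed

lemma forest_imp_acyclic:
  assumes "forest s t Z"
  shows "acyclic (dedges s t Z)"
proof (rule acyclicI, intro allI notI)
  fix x assume "(x, x) \<in> (dedges s t Z)\<^sup>+"
  then obtain y where "(x, y) \<in> dedges s t Z" "(y, x) \<in> (dedges s t Z)\<^sup>*"
    by (meson tranclD)
  then obtain e where e: "e \<in> Z" "s e = x" "t e = y" "(y, x) \<in> (dedges s t Z)\<^sup>*"
    unfolding dedges_iff by blast
  have "(t e, s e) \<in> (dedges s t (Z - {e}))\<^sup>*"
    using rtrancl_dedges_avoid_source[OF e(4) e(2)] e(2,3) by simp
  then have "(t e, s e) \<in> (uedges s t (Z - {e}))\<^sup>*"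
    using rtrancl_mono[OF dedges_subset_uedges] by blast
  then show False using forest_no_bypass[OF assms e(1)] by blast
qed

text \<open>In a cycle of the underlying multigraph the sources of the edges are distinct and
  exhaust its nodes, so every node has an out-edge inside the cycle.\<close>

lemma acyclic_inj_on_imp_forest:
  assumes "finite Z" "inj_on s Z" "acyclic (dedges s t Z)"
  shows "forest s t Z"
  unfolding forest_def
proof (intro notI, elim exE)
  fix es vs assume "ucycle s t Z es vs"
  then have ne: "es \<noteq> []" and len: "length vs = length es + 1" and des: "distinct es"
    and sub: "set es \<subseteq> Z" and closed: "hd vs = last vs" and dtl: "distinct (tl vs)"
    and ends: "\<forall>i<length es. {s (es ! i), t (es ! i)} = {vs ! i, vs ! Suc i}"
    unfolding ucycle_def by auto
  define V where "V = set (tl vs)"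
  have tl: "tl vs \<noteq> []" using len ne by (cases vs) auto
  then have vs: "vs = hd vs # tl vs" by (metis list.collapse tl_Nil)
  have "hd vs \<in> set (tl vs)" using closed tl last_tl[of vs] last_in_set[OF tl] by simp
  then have "set vs = V" unfolding V_def by (subst vs) auto
  have endpoints: "s e \<in> V" "t e \<in> V" if "e \<in> set es" for e
  proof -
    obtain i where "i < length es" "es ! i = e"
      using \<open>e \<in> set es\<close> by (auto simp: in_set_conv_nth)
    then have "{s e, t e} = {vs ! i, vs ! Suc i}" using ends by auto
    moreover have "vs ! i \<in> set vs" "vs ! Suc i \<in> set vs"
      using \<open>i < length es\<close> len by (intro nth_mem, simp)+
    ultimately have "{s e, t e} \<subseteq> set vs" by simp
    then show "s e \<in> V" "t e \<in> V" using \<open>set vs = V\<close> by auto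
  qed
  have "card (s ` set es) = card V"
    using card_image[OF inj_on_subset[OF assms(2) sub]] distinct_card[OF des]
      distinct_card[OF dtl] len unfolding V_def by simp
  then have sources: "s ` set es = V"
    using endpoints by (intro card_subset_eq) (auto simp: V_def)
  have "s (hd es) \<in> V" using sources ne by (metis hd_in_set image_eqI)
  then obtain w where w: "w \<in> V" "\<forall>u\<in>V. (w, u) \<notin> dedges s t Z"
    by (rule finite_acyclic_minimal[OF finite_dedges[OF assms(1)] assms(3)])
  then obtain e where "e \<in> set es" "s e = w" using sources by auto
  then show False using w(2) endpoints sub unfolding dedges_iff by blast
qed

section \<open>Spanning in-forests\<close>

definition in_forest :: "('e \<Rightarrow> nat) \<Rightarrow> ('e \<Rightarrow> nat) \<Rightarrow> 'e set \<Rightarrow> nat set \<Rightarrow> nat set \<Rightarrow> 'e set \<Rightarrow> bool"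
  where "in_forest s t E N B Z \<longleftrightarrow> Z \<subseteq> E \<and> s ` Z = N - B \<and> inj_on s Z \<and> acyclic (dedges s t Z)"

locale multidigraph =
  fixes s t :: "'e \<Rightarrow> nat" and E :: "'e set" and N :: "nat set"
  assumes finite_E: "finite E" and finite_N: "finite N"
    and ends_in_N: "\<forall>e\<in>E. s e \<in> N \<and> t e \<in> N"
begin

lemma rtrancl_uedges_in_N:
  assumes "(x, y) \<in> (uedges s t Z)\<^sup>*" "Z \<subseteq> E" "x \<in> N"
  shows "y \<in> N"
  using assms(1)
proof (induction rule: rtrancl_induct)
  case (step y z)
  then obtain e where "e \<in> E" "{s e, t e} = {y, z}" using assms(2) unfolding uedges_iff by blast
  then show ?case using ends_in_N by (metis doubleton_eq_iff)
qed (use assms(3) in simp)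

lemma rtrancl_dedges_in_N: "(x, y) \<in> (dedges s t Z)\<^sup>* \<Longrightarrow> Z \<subseteq> E \<Longrightarrow> x \<in> N \<Longrightarrow> y \<in> N"
  by (rule rtrancl_uedges_in_N[OF rtrancl_dedges_imp_uedges])

lemma ucomp_closed:
  assumes "y \<in> ucomp s t Z N x" "(y, w) \<in> (uedges s t Z)\<^sup>*" "Z \<subseteq> E"
  shows "w \<in> ucomp s t Z N x"
proof -
  have "y \<in> N" "(x, y) \<in> (uedges s t Z)\<^sup>*" using assms(1) unfolding ucomp_def by auto
  then show ?thesis
    using assms(2) rtrancl_uedges_in_N[OF assms(2,3)] rtrancl_trans unfolding ucomp_def by fastforce
qed

lemma ucomp_eq:
  assumes "y \<in> ucomp s t Z N x" "Z \<subseteq> E"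
  shows "ucomp s t Z N y = ucomp s t Z N x"
proof -
  have "y \<in> N" "(y, x) \<in> (uedges s t Z)\<^sup>*" "(x, y) \<in> (uedges s t Z)\<^sup>*"
    using assms(1) rtrancl_uedges_sym unfolding ucomp_def by auto
  then show ?thesis unfolding ucomp_def by (blast intro: rtrancl_trans)
qed

definition root :: "'e set \<Rightarrow> nat set \<Rightarrow> nat \<Rightarrow> nat" where
  "root Z B x = (THE r. r \<in> B \<and> (x, r) \<in> (dedges s t Z)\<^sup>*)"

lemma in_forest_unique_root:
  assumes "in_forest s t E N B Z" "x \<in> N"
  shows "\<exists>!r. r \<in> B \<and> (x, r) \<in> (dedges s t Z)\<^sup>*"
proof -
  have Z: "Z \<subseteq> E" "s ` Z = N - B" "inj_on s Z" "acyclic (dedges s t Z)"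
    using assms(1) unfolding in_forest_def by auto
  then have finite: "finite (dedges s t Z)" using finite_dedges finite_subset[OF Z(1) finite_E] by blast
  obtain w where w: "(x, w) \<in> (dedges s t Z)\<^sup>*" "\<forall>z. (w, z) \<notin> dedges s t Z"
    using finite_acyclic_reach_sink[OF finite Z(4)] by blast
  have "w \<in> B"
    using w rtrancl_dedges_in_N[OF w(1) Z(1) assms(2)] Z(2)
    unfolding dedges_no_successor_iff by blast
  moreover have "r = w" if "r \<in> B" "(x, r) \<in> (dedges s t Z)\<^sup>*" for r
    using single_valued_sink_unique[OF single_valued_dedges[OF Z(3)] that(2) w(1) _ w(2)]
      that(1) Z(2) unfolding dedges_no_successor_iff by blast
  ultimately show ?thesis using w(1) by blast
qed

lemma in_forest_root:
  "in_forest s t E N B Z \<Longrightarrow> x \<in> N \<Longrightarrow> root Z B x \<in> B \<and> (x, root Z B x) \<in> (dedges s t Z)\<^sup>*"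
  unfolding root_def by (rule theI', rule in_forest_unique_root)

lemma in_forest_root_eqI:
  "in_forest s t E N B Z \<Longrightarrow> x \<in> N \<Longrightarrow> r \<in> B \<Longrightarrow> (x, r) \<in> (dedges s t Z)\<^sup>* \<Longrightarrow> root Z B x = r"
  using in_forest_unique_root in_forest_root by blast

lemma in_forest_root_reach:
  assumes "in_forest s t E N B Z" "x \<in> N" "(x, w) \<in> (dedges s t Z)\<^sup>*"
  shows "root Z B w = root Z B x"
proof -
  have "w \<in> N" using rtrancl_dedges_in_N assms unfolding in_forest_def by blast
  then have "root Z B w \<in> B" "(w, root Z B w) \<in> (dedges s t Z)\<^sup>*"
    using in_forest_root[OF assms(1)] by auto
  then have "root Z B w \<in> B" "(x, root Z B w) \<in> (dedges s t Z)\<^sup>*"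
    using rtrancl_trans[OF assms(3)] by auto
  then show ?thesis using in_forest_root_eqI[OF assms(1,2)] by simp
qed

end

context multidigraph
begin

lemma in_forest_edge_root:
  assumes "in_forest s t E N B Z" "e \<in> Z"
  shows "root Z B (t e) = root Z B (s e)"
proof -
  have "s e \<in> N" "(s e, t e) \<in> dedges s t Z"
    using assms ends_in_N unfolding in_forest_def dedges_iff by auto
  then show ?thesis using in_forest_root_reach[OF assms(1)] by blast
qed

lemma in_forest_ucomp:
  assumes forest: "in_forest s t E N B Z" and "x \<in> N"
  shows "ucomp s t Z N x = {y \<in> N. root Z B y = root Z B x}"
proof
  have Z: "Z \<subseteq> E" using forest unfolding in_forest_def by simp
  show "ucomp s t Z N x \<subseteq> {y \<in> N. root Z B y = root Z B x}"
  proof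
    fix y assume "y \<in> ucomp s t Z N x"
    then have "y \<in> N" "(x, y) \<in> (uedges s t Z)\<^sup>*" unfolding ucomp_def by auto
    moreover have "root Z B y = root Z B x" using \<open>(x, y) \<in> _\<close>
    proof (induction rule: rtrancl_induct)
      case (step y z)
      then obtain e where "e \<in> Z" "{s e, t e} = {y, z}" unfolding uedges_iff by blast
      then have "root Z B z = root Z B y"
        using in_forest_edge_root[OF forest] by (metis doubleton_eq_iff)
      then show ?case using step.IH by simp
    qed simp
    ultimately show "y \<in> {y \<in> N. root Z B y = root Z B x}" by simp
  qed
  show "{y \<in> N. root Z B y = root Z B x} \<subseteq> ucomp s t Z N x"
  proof
    fix y assume y: "y \<in> {y \<in> N. root Z B y = root Z B x}"
    have "(x, root Z B x) \<in> (uedges s t Z)\<^sup>*" "(y, root Z B y) \<in> (uedges s t Z)\<^sup>*"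
      using in_forest_root[OF forest] \<open>x \<in> N\<close> y rtrancl_dedges_imp_uedges by blast+
    then have "(x, y) \<in> (uedges s t Z)\<^sup>*"
      using y rtrancl_trans[OF _ rtrancl_uedges_sym] by simp
    then show "y \<in> ucomp s t Z N x" using y unfolding ucomp_def by simp
  qed
qed

lemma in_forest_imp_Theta:
  assumes forest: "in_forest s t E N B Z" and "B \<subseteq> N" "F \<subseteq> N"
    and reach: "\<forall>r\<in>B. \<exists>f\<in>F. (f, r) \<in> (dedges s t Z)\<^sup>*"
  shows "Z \<in> Theta E s t N F B"
proof -
  have Z: "Z \<subseteq> E" "s ` Z = N - B" "inj_on s Z" "acyclic (dedges s t Z)"
    using forest unfolding in_forest_def by auto
  define basin where "basin r = {y \<in> N. root Z B y = r}" for r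
  have root_B: "root Z B r = r" if "r \<in> B" for r
    using in_forest_root_eqI[OF forest _ that rtrancl_refl] that \<open>B \<subseteq> N\<close> by auto
  have ucomp: "ucomp s t Z N x = basin (root Z B x)" if "x \<in> N" for x
    using in_forest_ucomp[OF forest that] unfolding basin_def .
  have comps: "comps s t Z N = basin ` B"
  proof
    show "comps s t Z N \<subseteq> basin ` B"
    proof
      fix C assume "C \<in> comps s t Z N"
      then obtain x where "x \<in> N" "C = ucomp s t Z N x" unfolding comps_def by blast
      then show "C \<in> basin ` B" using ucomp in_forest_root[OF forest] by blast
    qed
    show "basin ` B \<subseteq> comps s t Z N"
    proof
      fix C assume "C \<in> basin ` B"
      then obtain r where r: "r \<in> B" "C = basin r" by blast
      then have "C = ucomp s t Z N r" using ucomp[of r] root_B \<open>B \<subseteq> N\<close> by auto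
      then show "C \<in> comps s t Z N" unfolding comps_def using r(1) \<open>B \<subseteq> N\<close> by blast
    qed
  qed
  have "inj_on basin B"
    by (rule inj_onI) (use root_B \<open>B \<subseteq> N\<close> in \<open>auto simp: basin_def\<close>)
  then have "card (comps s t Z N) = card B" using comps card_image by simp
  moreover have "forest s t Z"
    using acyclic_inj_on_imp_forest[OF _ Z(3,4)] finite_subset[OF Z(1) finite_E] by blast
  moreover have "C \<inter> F \<noteq> {} \<and> (\<exists>r\<in>B \<inter> C. \<forall>v\<in>C. (\<not> (\<exists>e\<in>Z. s e = v)) \<longleftrightarrow> v = r)"
    if "C \<in> comps s t Z N" for C
  proof -
    have "C \<in> basin ` B" using that comps by simp
    then obtain r where r: "r \<in> B" "C = basin r" by blast
    obtain f where f: "f \<in> F" "(f, r) \<in> (dedges s t Z)\<^sup>*" using reach r(1) by blast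
    then have "root Z B f = r" using in_forest_root_eqI[OF forest _ r(1)] \<open>F \<subseteq> N\<close> by blast
    then have "f \<in> C \<inter> F" using f(1) \<open>F \<subseteq> N\<close> r(2) unfolding basin_def by blast
    moreover have "r \<in> B \<inter> C" using r root_B \<open>B \<subseteq> N\<close> unfolding basin_def by auto
    moreover have "(\<not> (\<exists>e\<in>Z. s e = v)) \<longleftrightarrow> v = r" if "v \<in> C" for v
    proof -
      have v: "v \<in> N" "root Z B v = r" using that r(2) unfolding basin_def by auto
      have "v \<notin> s ` Z \<longleftrightarrow> v \<in> B" using v(1) Z(2) by blast
      also have "\<dots> \<longleftrightarrow> v = r" using v(2) root_B r(1) by metis
      finally show ?thesis by blast
    qed
    ultimately show ?thesis by blast
  qed
  ultimately show ?thesis using Z(1) unfolding Theta_def by blast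
qed

lemma comps_closed:
  assumes "C \<in> comps s t Z N" "Z \<subseteq> E" "u \<in> C" "(u, w) \<in> (uedges s t Z)\<^sup>*"
  shows "w \<in> C"
  using assms ucomp_closed unfolding comps_def by blast

lemma ThetaD:
  assumes "Z \<in> Theta E s t N F B"
  shows "Z \<subseteq> E" "forest s t Z" "card (comps s t Z N) = card B"
    "\<And>C. C \<in> comps s t Z N \<Longrightarrow> C \<inter> F \<noteq> {}"
    "\<And>C. C \<in> comps s t Z N \<Longrightarrow> \<exists>r\<in>B \<inter> C. \<forall>v\<in>C. v \<notin> s ` Z \<longleftrightarrow> v = r"
  using assms unfolding Theta_def no_edge_from_iff by simp_all

lemma Theta_component_roots:
  assumes Theta: "Z \<in> Theta E s t N F B" and "B \<subseteq> N"
  obtains rt where "\<And>C. C \<in> comps s t Z N \<Longrightarrow> rt C \<in> B \<inter> C"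
    "\<And>C v. C \<in> comps s t Z N \<Longrightarrow> v \<in> C \<Longrightarrow> v \<notin> s ` Z \<longleftrightarrow> v = rt C"
    "rt ` comps s t Z N = B"
proof -
  define rt where "rt C = (SOME r. r \<in> B \<inter> C \<and> (\<forall>v\<in>C. v \<notin> s ` Z \<longleftrightarrow> v = r))" for C
  have rt: "rt C \<in> B \<inter> C \<and> (\<forall>v\<in>C. v \<notin> s ` Z \<longleftrightarrow> v = rt C)" if C: "C \<in> comps s t Z N" for C
  proof -
    obtain r where "r \<in> B \<inter> C \<and> (\<forall>v\<in>C. v \<notin> s ` Z \<longleftrightarrow> v = r)"
      using ThetaD(5)[OF Theta C] by blast
    then show ?thesis unfolding rt_def by (rule someI)
  qed
  have "inj_on rt (comps s t Z N)"
  proof (rule inj_onI)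
    fix C1 C2 assume C: "C1 \<in> comps s t Z N" "C2 \<in> comps s t Z N" "rt C1 = rt C2"
    obtain x1 x2 where x: "C1 = ucomp s t Z N x1" "C2 = ucomp s t Z N x2"
      using C(1,2) unfolding comps_def by blast
    have "rt C1 \<in> C1" "rt C1 \<in> C2" using rt[OF C(1)] rt[OF C(2)] C(3) by auto
    then show "C1 = C2" using ucomp_eq[OF _ ThetaD(1)[OF Theta]] x by metis
  qed
  then have "card (rt ` comps s t Z N) = card B" using ThetaD(3)[OF Theta] card_image by metis
  moreover have "rt ` comps s t Z N \<subseteq> B" using rt by blast
  ultimately have "rt ` comps s t Z N = B"
    using finite_subset[OF \<open>B \<subseteq> N\<close> finite_N] card_subset_eq by blast
  then show thesis using that rt by blast
qed

lemma Theta_imp_in_forest: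
  assumes Theta: "Z \<in> Theta E s t N F B" and "B \<subseteq> N"
  shows "in_forest s t E N B Z" "\<forall>r\<in>B. \<exists>f\<in>F. (f, r) \<in> (dedges s t Z)\<^sup>*"
proof -
  obtain rt where rt: "\<And>C. C \<in> comps s t Z N \<Longrightarrow> rt C \<in> B \<inter> C"
    and rt_sink: "\<And>C v. C \<in> comps s t Z N \<Longrightarrow> v \<in> C \<Longrightarrow> v \<notin> s ` Z \<longleftrightarrow> v = rt C"
    and rt_onto: "rt ` comps s t Z N = B"
    using Theta_component_roots[OF assms] by blast
  note Z = ThetaD(1,2)[OF Theta]
  have finite: "finite (dedges s t Z')" if "Z' \<subseteq> Z" for Z'
    using finite_dedges finite_subset[OF subset_trans[OF that Z(1)] finite_E] by blast
  have acyclic: "acyclic (dedges s t Z)" using forest_imp_acyclic[OF Z(2)] .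
  have comp: "ucomp s t Z N v \<in> comps s t Z N" "v \<in> ucomp s t Z N v" if "v \<in> N" for v
    using that unfolding comps_def ucomp_def by auto
  have sink: "w = rt C"
    if C: "C \<in> comps s t Z N" "u \<in> C" and "Z' \<subseteq> Z" "(u, w) \<in> (dedges s t Z')\<^sup>*" "w \<notin> s ` Z"
    for C u w Z'
  proof -
    have "(u, w) \<in> (dedges s t Z)\<^sup>*"
      using subsetD[OF rtrancl_mono[OF dedges_mono[OF that(3)]] that(4)] .
    then have "w \<in> C" using comps_closed[OF C(1) Z(1) C(2)] rtrancl_dedges_imp_uedges by blast
    then show ?thesis using rt_sink[OF C(1) \<open>w \<in> C\<close>] that(5) by simp
  qed
  have roots_out: "r \<notin> s ` Z" if r: "r \<in> B" for r
  proof -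
    obtain C where "C \<in> comps s t Z N" "r = rt C" using rt_onto r by blast
    then show ?thesis using rt[of C] rt_sink[of C r] by simp
  qed
  have sources: "s ` Z = N - B"
  proof
    show "s ` Z \<subseteq> N - B"
    proof
      fix v assume "v \<in> s ` Z"
      then obtain e where "e \<in> Z" "v = s e" by blast
      then show "v \<in> N - B" using Z(1) ends_in_N roots_out[of v] by blast
    qed
    show "N - B \<subseteq> s ` Z"
    proof
      fix v assume v: "v \<in> N - B"
      then have "rt (ucomp s t Z N v) \<in> B" using rt[OF comp(1)] by blast
      then have "v \<noteq> rt (ucomp s t Z N v)" using v by auto
      then show "v \<in> s ` Z" using rt_sink[OF comp] v by blast
    qed
  qed
  have "inj_on s Z"
  proof (rule inj_onI, rule ccontr)
    fix e1 e2 assume e: "e1 \<in> Z" "e2 \<in> Z" "s e1 = s e2" "e1 \<noteq> e2"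
    let ?Z' = "Z - {e1}" and ?C = "ucomp s t Z N (s e1)"
    have "s e1 \<in> N" using e(1) Z(1) ends_in_N by blast
    note C = comp[OF this]
    have acyclic': "acyclic (dedges s t ?Z')"
      using acyclic_subset[OF acyclic dedges_mono[OF Diff_subset]] .
    have reach_root: "(u, rt ?C) \<in> (uedges s t ?Z')\<^sup>*" if u: "u \<in> ?C" for u
    proof -
      obtain w where w: "(u, w) \<in> (dedges s t ?Z')\<^sup>*" "\<forall>z. (w, z) \<notin> dedges s t ?Z'"
        using finite_acyclic_reach_sink[OF finite acyclic'] by blast
      have "w \<notin> s ` ?Z'" using w(2) unfolding dedges_no_successor_iff .
      then have "w \<notin> s ` Z" using e by auto
      then have "w = rt ?C" by (rule sink[OF C(1) u Diff_subset w(1)])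
      then show ?thesis using rtrancl_dedges_imp_uedges[OF w(1)] by simp
    qed
    have "(s e1, t e1) \<in> uedges s t Z" unfolding uedges_iff using e(1) by blast
    then have "t e1 \<in> ?C" using comps_closed[OF C(1) Z(1) C(2)] by blast
    then have "(t e1, s e1) \<in> (uedges s t ?Z')\<^sup>*"
      using reach_root C(2) rtrancl_trans[OF _ rtrancl_uedges_sym] by blast
    then show False using forest_no_bypass[OF Z(2) e(1)] by blast
  qed
  then show "in_forest s t E N B Z"
    unfolding in_forest_def using Z(1) sources acyclic by blast
  show "\<forall>r\<in>B. \<exists>f\<in>F. (f, r) \<in> (dedges s t Z)\<^sup>*"
  proof
    fix r assume "r \<in> B"
    then have "r \<in> N" using \<open>B \<subseteq> N\<close> by blast
    note C = comp[OF this]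
    have r: "r = rt (ucomp s t Z N r)"
      by (rule sink[OF C(1) C(2) subset_refl rtrancl_refl roots_out[OF \<open>r \<in> B\<close>]])
    obtain f where f: "f \<in> ucomp s t Z N r" "f \<in> F" using ThetaD(4)[OF Theta C(1)] by blast
    obtain w where w: "(f, w) \<in> (dedges s t Z)\<^sup>*" "\<forall>z. (w, z) \<notin> dedges s t Z"
      using finite_acyclic_reach_sink[OF finite[OF subset_refl] acyclic] by blast
    have "w \<notin> s ` Z" using w(2) unfolding dedges_no_successor_iff .
    then have "w = r" using sink[OF C(1) f(1) subset_refl w(1)] r by simp
    then show "\<exists>f\<in>F. (f, r) \<in> (dedges s t Z)\<^sup>*" using w(1) f(2) by blast
  qed
qed

lemma Theta_iff:
  assumes "B \<subseteq> N" "F \<subseteq> N"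
  shows "Z \<in> Theta E s t N F B \<longleftrightarrow>
    in_forest s t E N B Z \<and> (\<forall>r\<in>B. \<exists>f\<in>F. (f, r) \<in> (dedges s t Z)\<^sup>*)"
  using Theta_imp_in_forest[OF _ assms(1)] in_forest_imp_Theta[OF _ assms] by blast

text \<open>When \<open>|F| \<le> |B|\<close>, every root is reached from exactly one node of \<open>F\<close>.\<close>

lemma Theta_F_nodes_separated:
  assumes Theta: "Z \<in> Theta E s t N F B" and "B \<subseteq> N" "F \<subseteq> N" "finite F" "card F \<le> card B"
    and f: "f1 \<in> F" "f2 \<in> F" "(f1, w) \<in> (dedges s t Z)\<^sup>*" "(f2, w) \<in> (dedges s t Z)\<^sup>*"
  shows "f1 = f2"
proof -
  note forest = Theta_imp_in_forest(1)[OF Theta \<open>B \<subseteq> N\<close>]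
  have "root Z B ` F = B"
  proof
    show "root Z B ` F \<subseteq> B" using in_forest_root[OF forest] \<open>F \<subseteq> N\<close> by blast
    show "B \<subseteq> root Z B ` F"
    proof
      fix r assume "r \<in> B"
      then obtain f where "f \<in> F" "(f, r) \<in> (dedges s t Z)\<^sup>*"
        using Theta_imp_in_forest(2)[OF Theta \<open>B \<subseteq> N\<close>] by blast
      then show "r \<in> root Z B ` F"
        using in_forest_root_eqI[OF forest _ \<open>r \<in> B\<close>] \<open>F \<subseteq> N\<close> by force
    qed
  qed
  then have "inj_on (root Z B) F"
    using eq_card_imp_inj_on[OF \<open>finite F\<close>] card_image_le[OF \<open>finite F\<close>, of "root Z B"]
      \<open>card F \<le> card B\<close> by (metis le_antisym)
  moreover have "root Z B f1 = root Z B f2"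
    using in_forest_root_reach[OF forest] f \<open>F \<subseteq> N\<close> by (metis subsetD)
  ultimately show ?thesis using f(1,2) by (meson inj_onD)
qed

end

lemma exchange_sources:
  assumes "X \<subseteq> Z" "\<And>x. x \<in> X \<Longrightarrow> s (g x) = s x"
  shows "s ` ((Z - X) \<union> g ` X) = s ` Z"
proof -
  have "s ` g ` X = s ` X" using assms(2) by (simp add: image_image cong: image_cong)
  then show ?thesis using assms(1) by (metis Diff_partition image_Un sup_commute)
qed

lemma exchange_inj_on_source:
  assumes inj: "inj_on s Z" and "X \<subseteq> Z" and g: "\<And>x. x \<in> X \<Longrightarrow> s (g x) = s x"
  shows "inj_on s ((Z - X) \<union> g ` X)"
proof -
  have "inj_on s (g ` X)"
  proof (rule inj_onI)
    fix w1 w2 assume "w1 \<in> g ` X" "w2 \<in> g ` X" "s w1 = s w2"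
    then obtain x1 x2 where "x1 \<in> X" "x2 \<in> X" "w1 = g x1" "w2 = g x2" "s x1 = s x2"
      using g by auto
    then show "w1 = w2" using inj_onD[OF inj] \<open>X \<subseteq> Z\<close> by blast
  qed
  moreover have "s ` (Z - X) \<inter> s ` g ` X = {}"
  proof -
    have "s ` g ` X = s ` X" using g by (simp add: image_image cong: image_cong)
    moreover have "s ` (Z - X) \<inter> s ` X = s ` ((Z - X) \<inter> X)"
      using inj_on_image_Int[OF inj, of "Z - X" X] \<open>X \<subseteq> Z\<close> by blast
    ultimately show ?thesis by (simp add: Diff_Int_distrib2)
  qed
  ultimately show ?thesis
    using inj_on_subset[OF inj Diff_subset] by (auto simp: inj_on_Un)
qed

section \<open>P-graphs\<close>

locale P_graph =
  fixes E :: "'e set" and s t :: "'e \<Rightarrow> nat" and \<pi> :: "'e \<Rightarrow> 'r::ordered_comm_ring"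
    and \<mu> :: "'e \<Rightarrow> 'e set"
  assumes P_graph: "Pgraph E s t \<pi> \<mu>"
begin

abbreviation "E_neg \<equiv> Eneg E \<pi>"
abbreviation "E_pos \<equiv> Epos E \<pi>"
abbreviation "mu_star \<equiv> mustar E \<pi> \<mu>"
abbreviation "im_mu \<equiv> immu E \<pi> \<mu>"

lemma E_eq: "E = E_pos \<union> E_neg"
  using P_graph unfolding Pgraph_def by blast

lemma Epos_Eneg_disjoint: "E_pos \<inter> E_neg = {}"
  unfolding Epos_def Eneg_def by auto

lemma Eneg_subset: "E_neg \<subseteq> E"
  unfolding Eneg_def by auto

lemma dcycle_one_negative: "dcycle s t es \<Longrightarrow> set es \<subseteq> E \<Longrightarrow> card (set es \<inter> E_neg) \<le> 1"
  using P_graph unfolding Pgraph_def by blast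

lemma mu_subset_Epos: "e \<in> E_neg \<Longrightarrow> \<mu> e \<subseteq> E_pos"
  using P_graph unfolding Pgraph_def by blast

lemma mu_source: "e \<in> E_neg \<Longrightarrow> g \<in> \<mu> e \<Longrightarrow> s g = s e"
  using P_graph unfolding Pgraph_def by blast

lemma mu_cycle_target:
  "e \<in> E_neg \<Longrightarrow> g \<in> \<mu> e \<Longrightarrow> dcycle s t es \<Longrightarrow> set es \<subseteq> E \<Longrightarrow> g \<in> set es \<Longrightarrow>
    t e \<in> s ` set es"
  using P_graph unfolding Pgraph_def by (metis list.set_map)

lemma mu_disjoint: "e1 \<in> E_neg \<Longrightarrow> e2 \<in> E_neg \<Longrightarrow> e1 \<noteq> e2 \<Longrightarrow> \<mu> e1 \<inter> \<mu> e2 = {}"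
  using P_graph unfolding Pgraph_def by blast

lemma mu_star_eq: "e \<in> E_neg \<Longrightarrow> g \<in> \<mu> e \<Longrightarrow> mu_star g = e"
  unfolding mustar_def using mu_disjoint by (intro the_equality) blast+

lemma mu_star_in_Eneg: "g \<in> im_mu \<Longrightarrow> mu_star g \<in> E_neg \<and> g \<in> \<mu> (mu_star g)"
  unfolding immu_def using mu_star_eq by auto

lemma im_mu_subset_Epos: "im_mu \<subseteq> E_pos"
  unfolding immu_def using mu_subset_Epos by blast

lemma source_mu_star: "g \<in> im_mu \<Longrightarrow> s (mu_star g) = s g"
  using mu_star_in_Eneg mu_source by metis

end

context P_graph
begin

text \<open>Replacing negative edges of an acyclic edge set by edges of their \<open>\<mu>\<close>-sets keeps it
  acyclic: a cycle through a replacement \<open>g \<in> \<mu> e\<close> visits \<open>t e\<close>, so the nodes of the cycle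
  would be closed under the old edges.\<close>

lemma acyclic_exchange_mu:
  assumes "Z \<subseteq> E" "finite Z" "acyclic (dedges s t Z)" "S \<subseteq> Z \<inter> E_neg"
    and fc: "\<And>e. e \<in> S \<Longrightarrow> fc e \<in> \<mu> e"
  shows "acyclic (dedges s t ((Z - S) \<union> fc ` S))"
proof (rule acyclicI, intro allI notI)
  let ?W = "(Z - S) \<union> fc ` S"
  fix x assume "(x, x) \<in> (dedges s t ?W)\<^sup>+"
  then obtain es where es: "dcycle s t es" "set es \<subseteq> ?W" by (rule trancl_dedges_imp_dcycle)
  have "?W \<subseteq> E"
    using assms(1,4) fc mu_subset_Epos unfolding Epos_def by blast
  then have esE: "set es \<subseteq> E" using es(2) by blast
  have step: "\<exists>u\<in>s ` set es. (v, u) \<in> dedges s t Z" if v: "v \<in> s ` set es" for v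
  proof -
    obtain z where z: "z \<in> set es" "s z = v" using v by blast
    show ?thesis
    proof (cases "z \<in> Z - S")
      case True
      then show ?thesis
        using dcycle_target_is_source[OF es(1) z(1)] z(2) unfolding dedges_iff by blast
    next
      case False
      then obtain e where e: "e \<in> S" "z = fc e" using z(1) es(2) by blast
      then have "e \<in> Z" "e \<in> E_neg" "z \<in> \<mu> e" using assms(4) fc by blast+
      then show ?thesis
        using mu_cycle_target[OF _ _ es(1) esE z(1)] mu_source z(2) unfolding dedges_iff by metis
    qed
  qed
  have "s (hd es) \<in> s ` set es" using es(1) unfolding dcycle_def by simp
  then obtain w where "w \<in> s ` set es" "\<forall>u\<in>s ` set es. (w, u) \<notin> dedges s t Z"
    by (rule finite_acyclic_minimal[OF finite_dedges[OF assms(2)] assms(3)])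
  then show False using step by blast
qed

text \<open>A cycle contains at most one negative edge, so it lies in \<open>A\<close> or all its edges but one
  negative edge of \<open>B\<close> are positive edges of \<open>B\<close>.\<close>

lemma acyclic_one_negative:
  assumes "C \<subseteq> A \<union> (B \<inter> E_neg)" "C \<inter> E_pos \<subseteq> B" "C \<subseteq> E"
    "acyclic (dedges s t A)" "acyclic (dedges s t B)"
  shows "acyclic (dedges s t C)"
proof (rule acyclicI, intro allI notI)
  fix x assume "(x, x) \<in> (dedges s t C)\<^sup>+"
  then obtain es where es: "dcycle s t es" "set es \<subseteq> C" by (rule trancl_dedges_imp_dcycle)
  show False
  proof (cases "set es \<subseteq> A")
    case True
    then show False using dcycle_not_acyclic[OF es(1)] assms(4) by blast
  next
    case False
    then obtain h where h: "h \<in> set es" "h \<in> B" "h \<in> E_neg" using es(2) assms(1) by blast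
    have "f \<in> B" if f: "f \<in> set es" for f
    proof (cases "f = h")
      case False
      have "f \<notin> E_neg"
      proof
        assume "f \<in> E_neg"
        then have "{h, f} \<subseteq> set es \<inter> E_neg" using h f by blast
        then have "2 \<le> card (set es \<inter> E_neg)"
          using False card_mono[of "set es \<inter> E_neg" "{h, f}"] by simp
        then show False using dcycle_one_negative[OF es(1)] es(2) assms(3) by fastforce
      qed
      then show ?thesis using f es(2) assms(2,3) E_eq by blast
    qed (use h in blast)
    then show False using dcycle_not_acyclic[OF es(1)] assms(5) by blast
  qed
qed

lemma exchange_back:
  assumes Z: "Z \<subseteq> E" "inj_on s Z" and M: "M \<subseteq> Z \<inter> im_mu"
    and \<zeta>: "\<zeta> = (Z - M) \<union> mu_star ` M"
  shows "\<exists>X \<in> odot (\<zeta> \<inter> E_neg) (\<lambda>e. insert e (\<mu> e)). Z = X \<union> (\<zeta> \<inter> E_pos)"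
proof -
  have source: "s (mu_star g) = s g" if "g \<in> M" for g
    using source_mu_star M that by blast
  have "inj_on mu_star M"
  proof (rule inj_onI)
    fix g1 g2 assume g: "g1 \<in> M" "g2 \<in> M" "mu_star g1 = mu_star g2"
    then have "s g1 = s g2" using source by metis
    then show "g1 = g2" using inj_onD[OF Z(2)] g M by blast
  qed
  have star_neg: "mu_star g \<in> E_neg" "g \<in> \<mu> (mu_star g)" if "g \<in> M" for g
    using mu_star_in_Eneg M that by blast+
  have M_pos: "M \<subseteq> E_pos" using M im_mu_subset_Epos by blast
  define f where "f e = (if e \<in> mu_star ` M then inv_into M mu_star e else e)" for e
  have f_star: "f (mu_star g) = g" if "g \<in> M" for g
    unfolding f_def using inv_into_f_f[OF \<open>inj_on mu_star M\<close> that] that by simp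
  have f_in: "f e \<in> insert e (\<mu> e)" for e
  proof (cases "e \<in> mu_star ` M")
    case True
    then obtain g where "g \<in> M" "e = mu_star g" by blast
    then show ?thesis using f_star star_neg(2) by simp
  qed (simp add: f_def)
  have "Z = f ` (\<zeta> \<inter> E_neg) \<union> (\<zeta> \<inter> E_pos)"
  proof
    show "Z \<subseteq> f ` (\<zeta> \<inter> E_neg) \<union> (\<zeta> \<inter> E_pos)"
    proof
      fix z assume "z \<in> Z"
      show "z \<in> f ` (\<zeta> \<inter> E_neg) \<union> (\<zeta> \<inter> E_pos)"
      proof (cases "z \<in> M")
        case True
        then have "mu_star z \<in> \<zeta> \<inter> E_neg" using \<zeta> star_neg(1) by blast
        then show ?thesis using f_star[OF True] by (metis UnI1 image_eqI)
      next
        case False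
        then have "z \<in> \<zeta>" using \<zeta> \<open>z \<in> Z\<close> by blast
        have "z \<notin> mu_star ` M"
        proof
          assume "z \<in> mu_star ` M"
          then obtain g where "g \<in> M" "z = mu_star g" by blast
          then have "s g = s z" using source by simp
          then have "g = z" using inj_onD[OF Z(2)] M \<open>g \<in> M\<close> \<open>z \<in> Z\<close> by blast
          then show False using False \<open>g \<in> M\<close> by blast
        qed
        then have "f z = z" unfolding f_def by simp
        moreover have "z \<in> E_pos \<union> E_neg" using \<open>z \<in> Z\<close> Z(1) E_eq by blast
        ultimately show ?thesis using \<open>z \<in> \<zeta>\<close> by (metis Int_iff Un_iff image_eqI)
      qed
    qed
    show "f ` (\<zeta> \<inter> E_neg) \<union> (\<zeta> \<inter> E_pos) \<subseteq> Z"
    proof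
      fix x assume "x \<in> f ` (\<zeta> \<inter> E_neg) \<union> (\<zeta> \<inter> E_pos)"
      then consider e where "e \<in> \<zeta> \<inter> E_neg" "x = f e" | "x \<in> \<zeta> \<inter> E_pos" by blast
      then show "x \<in> Z"
      proof cases
        case (1 e)
        show ?thesis
        proof (cases "e \<in> mu_star ` M")
          case True
          then obtain g where "g \<in> M" "e = mu_star g" by blast
          then show ?thesis using 1 f_star M by auto
        next
          case False
          then show ?thesis using 1 \<zeta> unfolding f_def by auto
        qed
      next
        case 2
        then have "x \<notin> mu_star ` M" using star_neg(1) Epos_Eneg_disjoint by blast
        then show ?thesis using 2 \<zeta> by blast
      qed
    qed
  qed
  moreover have "f ` (\<zeta> \<inter> E_neg) \<in> odot (\<zeta> \<inter> E_neg) (\<lambda>e. insert e (\<mu> e))"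
    unfolding odot_def using f_in by blast
  ultimately show ?thesis by blast
qed

end

definition blk_end :: "(nat \<Rightarrow> nat) \<Rightarrow> nat \<Rightarrow> nat" where
  "blk_end ms i = (\<Sum>j\<in>{1..i}. ms j)"

lemma blk_end_mono: "i \<le> j \<Longrightarrow> blk_end ms i \<le> blk_end ms j"
  unfolding blk_end_def by (rule sum_mono2) auto

lemma mtot_eq: "mtot ms d = ms 0 + blk_end ms d"
  unfolding mtot_def blk_end_def by (simp add: atMost_atLeast0 sum.atLeast_Suc_atMost)

lemma Nblk_eq: "i \<in> {1..d} \<Longrightarrow> Nblk ms d i = {blk_end ms (i - 1) + 1 .. blk_end ms i}"
  unfolding Nblk_def blk_end_def by (cases i) (auto simp: atLeastLessThanSuc_atLeastAtMost)

lemma Nblk_0_eq: "Nblk ms d 0 = {blk_end ms d + 1 .. mtot ms d + 1}"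
  unfolding Nblk_def by (simp add: mtot_eq)

lemma Nblk_Suc_eq: "Nblk ms d (d + 1) = {mtot ms d + 1}"
  unfolding Nblk_def by simp

lemma top_in_Nblk_0: "mtot ms d + 1 \<in> Nblk ms d 0"
  unfolding Nblk_0_eq mtot_eq by simp

lemma Nblk_disjoint:
  assumes "i \<in> {1..d}" "j \<le> d + 1" "i \<noteq> j"
  shows "Nblk ms d i \<inter> Nblk ms d j = {}"
proof -
  have end_i: "blk_end ms i \<le> blk_end ms d" using assms(1) blk_end_mono by simp
  consider "j = 0" | "j = d + 1" | "j \<in> {1..d}" "j < i" | "j \<in> {1..d}" "i < j"
    using assms by fastforce
  then show ?thesis
  proof cases
    case 1
    then show ?thesis using end_i unfolding 1 Nblk_eq[OF assms(1)] Nblk_0_eq by auto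
  next
    case 2
    then show ?thesis using end_i unfolding 2 Nblk_eq[OF assms(1)] Nblk_Suc_eq mtot_eq by auto
  next
    case 3
    then have "blk_end ms j \<le> blk_end ms (i - 1)" using blk_end_mono by simp
    then show ?thesis unfolding Nblk_eq[OF assms(1)] Nblk_eq[OF 3(1)] by auto
  next
    case 4
    then have "blk_end ms i \<le> blk_end ms (j - 1)" using blk_end_mono by simp
    then show ?thesis unfolding Nblk_eq[OF assms(1)] Nblk_eq[OF 4(1)] by auto
  qed
qed

lemma Nblk_cover:
  assumes "v \<in> {1..mtot ms d + 1}"
  shows "v \<in> Nblk ms d 0 \<or> (\<exists>i\<in>{1..d}. v \<in> Nblk ms d i)"
proof (cases "v \<le> blk_end ms d")
  case True
  have "\<exists>i\<in>{1..n}. v \<in> {blk_end ms (i - 1) + 1 .. blk_end ms i}" if "v \<le> blk_end ms n" for n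
    using that
  proof (induction n)
    case (Suc n)
    then show ?case
      by (cases "v \<le> blk_end ms n") (force simp: blk_end_def)+
  qed (use assms in \<open>simp add: blk_end_def\<close>)
  then show ?thesis using True Nblk_eq by blast
next
  case False
  then show ?thesis using assms unfolding Nblk_0_eq by auto
qed

lemma Nblk_subset: "i \<le> d + 1 \<Longrightarrow> Nblk ms d i \<subseteq> {1..mtot ms d + 1}"
  using blk_end_mono[of i d ms] unfolding Nblk_def mtot_eq blk_end_def
  by (auto simp: atLeastLessThanSuc_atLeastAtMost)

section \<open>\<open>A\<close>-compatible P-graphs with condition ( * )\<close>

locale block_P_graph = P_graph E s t \<pi> \<mu> + multidigraph s t E "{1..mtot ms d + 1}"
  for E :: "'e set" and s t :: "'e \<Rightarrow> nat" and \<pi> :: "'e \<Rightarrow> 'r::ordered_comm_ring"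
    and \<mu> :: "'e \<Rightarrow> 'e set" and d :: nat and ms :: "nat \<Rightarrow> nat" +
  fixes ji :: "nat \<Rightarrow> nat" and k ell :: nat and Bt :: "nat set"
  assumes ji_in: "\<forall>i\<in>{1..d}. ji i \<in> Nblk ms d i"
    and block_edges: "\<forall>e\<in>E. \<forall>i\<in>{0..d}. \<forall>j\<in>{1..d}. i \<noteq> j \<longrightarrow>
      \<not> (s e \<in> Nblk ms d i \<and> t e \<in> Nblk ms d j)"
    and star: "\<forall>l'\<in>{1..mtot ms d}. \<forall>i\<in>{1..d}. \<forall>es.
      set es \<subseteq> E \<and> dpath s t es (ji i) l' \<and> (\<exists>e\<in>set es. \<pi> e < 0)
        \<longrightarrow> mtot ms d + 1 \<in> pathnodes s t es"
    and k: "k \<in> {1..d + 1}"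
    and Bt: "Bt \<in> odot ({1..d + 1} - {k}) (Nblk ms d)"
    and ell: "ell \<in> {1..mtot ms d + 1} - Bt"
begin

abbreviation "m \<equiv> mtot ms d"
abbreviation "N \<equiv> {1..m + 1}"
abbreviation "F \<equiv> ji ` {1..d} \<union> {m + 1}"
abbreviation "B \<equiv> insert ell Bt"

lemma Bt_choice:
  obtains g where "Bt = g ` ({1..d + 1} - {k})" "\<And>i. i \<in> {1..d + 1} - {k} \<Longrightarrow> g i \<in> Nblk ms d i"
  using Bt that unfolding odot_def by blast

lemma top_notin_Nblk: "i \<in> {1..d} \<Longrightarrow> m + 1 \<notin> Nblk ms d i"
  using Nblk_disjoint[of i d 0 ms] top_in_Nblk_0[of ms d] by auto

lemma B_subset_N: "B \<subseteq> N"
proof -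
  obtain g where g: "Bt = g ` ({1..d + 1} - {k})" "\<And>i. i \<in> {1..d + 1} - {k} \<Longrightarrow> g i \<in> Nblk ms d i"
    using Bt_choice by blast
  have "g i \<in> N" if "i \<in> {1..d + 1} - {k}" for i
    using g(2)[OF that] Nblk_subset[of i d ms] that by auto
  then show ?thesis using g(1) ell by auto
qed

lemma F_subset_N: "F \<subseteq> N"
proof -
  have "ji i \<in> N" if i: "i \<in> {1..d}" for i
    using Nblk_subset[of i d ms] bspec[OF ji_in i] i by auto
  then show ?thesis by auto
qed

lemma card_F_le_card_B: "card F \<le> card B"
proof -
  obtain g where g: "Bt = g ` ({1..d + 1} - {k})" "\<And>i. i \<in> {1..d + 1} - {k} \<Longrightarrow> g i \<in> Nblk ms d i"
    using Bt_choice by blast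
  have "inj_on g ({1..d + 1} - {k})"
  proof (rule inj_onI, rule ccontr)
    fix i j assume ij: "i \<in> {1..d + 1} - {k}" "j \<in> {1..d + 1} - {k}" "g i = g j" "i \<noteq> j"
    then have "Nblk ms d i \<inter> Nblk ms d j \<noteq> {}" using g(2) by (metis disjoint_iff)
    moreover have "i \<in> {1..d} \<or> j \<in> {1..d}" using ij(1,2,4) by auto
    ultimately show False using Nblk_disjoint ij(1,2,4) by (metis Int_commute atLeastAtMost_iff DiffD1)
  qed
  then have "card Bt = d" using g(1) k by (simp add: card_image)
  then have "card B = d + 1" using ell g(1) by simp
  moreover have "card F \<le> d + 1"
    using card_Un_le[of "ji ` {1..d}" "{m + 1}"] card_image_le[of "{1..d}" ji] by simp
  ultimately show ?thesis by simp
qed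

lemma source_in_block_of_target:
  assumes "e \<in> E" "j \<in> {1..d}" "t e \<in> Nblk ms d j"
  shows "s e \<in> Nblk ms d j"
proof (rule ccontr)
  assume "s e \<notin> Nblk ms d j"
  moreover obtain i where "i \<in> {0..d}" "s e \<in> Nblk ms d i"
    using Nblk_cover[of "s e" ms d] ends_in_N assms(1) by force
  ultimately have "i \<in> {0..d}" "i \<noteq> j" "s e \<in> Nblk ms d i" by auto
  then show False using bspec[OF block_edges assms(1)] assms(2,3) by blast
qed

lemma target_in_Nblk_0:
  assumes "e \<in> E" "s e \<in> Nblk ms d 0"
  shows "t e \<in> Nblk ms d 0"
proof (rule ccontr)
  assume "t e \<notin> Nblk ms d 0"
  then obtain j where "j \<in> {1..d}" "t e \<in> Nblk ms d j"
    using Nblk_cover[of "t e" ms d] ends_in_N assms(1) by blast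
  then show False
    using source_in_block_of_target[OF assms(1)] Nblk_disjoint[of j d 0 ms] assms(2) by auto
qed

lemma reach_into_block:
  assumes "T \<subseteq> E" "(u, w) \<in> (dedges s t T)\<^sup>*" "j \<in> {1..d}" "w \<in> Nblk ms d j"
  shows "u \<in> Nblk ms d j"
  using assms(2,4)
proof (induction rule: converse_rtrancl_induct)
  case (step y z)
  then obtain e where "e \<in> T" "s e = y" "t e = z" unfolding dedges_iff by blast
  then show ?case using source_in_block_of_target[of e j] assms(1,3) step.IH step.prems by blast
qed

lemma reach_from_Nblk_0:
  assumes "T \<subseteq> E" "(u, w) \<in> (dedges s t T)\<^sup>*" "u \<in> Nblk ms d 0"
  shows "w \<in> Nblk ms d 0"
  using assms(2,3)
proof (induction rule: rtrancl_induct)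
  case (step y z)
  then obtain e where "e \<in> T" "s e = y" "t e = z" unfolding dedges_iff by blast
  then have "e \<in> E" "s e \<in> Nblk ms d 0" using assms(1) step.IH step.prems by auto
  then show ?case using target_in_Nblk_0 \<open>t e = z\<close> by blast
qed

lemma B_inter_Nblk_0:
  assumes "m + 1 \<notin> B"
  shows "B \<inter> Nblk ms d 0 \<subseteq> {ell}"
proof -
  obtain g where g: "Bt = g ` ({1..d + 1} - {k})" "\<And>i. i \<in> {1..d + 1} - {k} \<Longrightarrow> g i \<in> Nblk ms d i"
    using Bt_choice by blast
  have "k = d + 1"
  proof (rule ccontr)
    assume "k \<noteq> d + 1"
    then have "g (d + 1) \<in> Bt" "g (d + 1) \<in> Nblk ms d (d + 1)" using g by auto
    then show False using assms Nblk_Suc_eq[of ms d] by auto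
  qed
  then have "Bt \<inter> Nblk ms d 0 = {}"
    using g Nblk_disjoint[of _ d 0 ms] by fastforce
  then show ?thesis by blast
qed

lemma top_reaches_root:
  assumes T: "in_forest s t E N B T" and "m + 1 \<notin> B" "r \<in> B" "r \<in> Nblk ms d 0"
  shows "(m + 1, r) \<in> (dedges s t T)\<^sup>*"
proof -
  let ?r = "root T B (m + 1)"
  have r: "?r \<in> B" "(m + 1, ?r) \<in> (dedges s t T)\<^sup>*" using in_forest_root[OF T] by auto
  moreover have "T \<subseteq> E" using T unfolding in_forest_def by blast
  ultimately have "?r \<in> Nblk ms d 0" using reach_from_Nblk_0 top_in_Nblk_0 by blast
  then have "?r = r" using B_inter_Nblk_0[OF assms(2)] r(1) assms(3,4) by blast
  then show ?thesis using r(2) by simp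
qed

lemma ji_reaches_root:
  assumes T: "T \<in> Theta E s t N F B" and "r \<in> B" "r \<noteq> m + 1"
    and not_top: "\<not> (m + 1 \<notin> B \<and> r \<in> Nblk ms d 0)"
  shows "\<exists>i\<in>{1..d}. (ji i, r) \<in> (dedges s t T)\<^sup>*"
proof -
  obtain f where f: "f \<in> F" "(f, r) \<in> (dedges s t T)\<^sup>*"
    using Theta_imp_in_forest(2)[OF T B_subset_N] \<open>r \<in> B\<close> by blast
  have "f \<noteq> m + 1"
  proof
    assume "f = m + 1"
    then have path: "(m + 1, r) \<in> (dedges s t T)\<^sup>+" using f(2) \<open>r \<noteq> m + 1\<close> rtrancl_eq_or_trancl by metis
    show False
    proof (cases "m + 1 \<in> B")
      case True
      have "m + 1 \<notin> s ` T"
        using Theta_imp_in_forest(1)[OF T B_subset_N] True unfolding in_forest_def by blast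
      then show False using path by (metis tranclD dedges_no_successor_iff)
    next
      case False
      then have "r \<notin> Nblk ms d 0" using not_top by blast
      then obtain j where "j \<in> {1..d}" "r \<in> Nblk ms d j"
        using Nblk_cover B_subset_N \<open>r \<in> B\<close> by blast
      then show False
        using reach_into_block[OF ThetaD(1)[OF T] f(2)] \<open>f = m + 1\<close> top_notin_Nblk by blast
    qed
  qed
  then show ?thesis using f by blast
qed

lemma negative_reach_passes_top:
  assumes T: "T \<subseteq> E" "acyclic (dedges s t T)" and i: "i \<in> {1..d}"
    and reach: "(ji i, v) \<in> (dedges s t T)\<^sup>*" and e: "e \<in> T" "s e = v" "\<pi> e < 0"
  shows "(ji i, m + 1) \<in> (dedges s t T)\<^sup>*"
proof -
  obtain es where es: "set es \<subseteq> T" "dpath s t es (ji i) (t e)" "e \<in> set es"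
    "\<And>y. y \<in> pathnodes s t es \<Longrightarrow> (ji i, y) \<in> (dedges s t T)\<^sup>* \<and> (y, t e) \<in> (dedges s t T)\<^sup>*"
    using dpath_through_edge[OF T(2) reach e(1,2)] by blast
  have "t e \<in> N" using ends_in_N e(1) T(1) by blast
  have "m + 1 \<in> pathnodes s t es"
  proof (cases "t e \<le> m")
    case True
    then have "t e \<in> {1..m}" using \<open>t e \<in> N\<close> by simp
    moreover have "set es \<subseteq> E \<and> dpath s t es (ji i) (t e) \<and> (\<exists>e\<in>set es. \<pi> e < 0)"
      using es(1-3) e(3) T(1) by blast
    ultimately show ?thesis using star i by blast
  next
    case False
    then have "t e = m + 1" using \<open>t e \<in> N\<close> by simp
    moreover have "t (last es) = t e" "es \<noteq> []" using es(2) unfolding dpath_def by auto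
    ultimately have "m + 1 \<in> t ` set es" using last_in_set by (metis image_eqI)
    then show ?thesis unfolding pathnodes_def by simp
  qed
  then show ?thesis using es(4) by blast
qed

text \<open>No node \<open>j\<^sub>i\<close> reaches a negative edge: through it, condition ( * ) would lead \<open>j\<^sub>i\<close> to
  \<open>m + 1 \<in> F\<close>, while distinct nodes of \<open>F\<close> lie in distinct trees.\<close>

lemma ji_reach_not_negative:
  assumes T: "T \<in> Theta E s t N F B" and i: "i \<in> {1..d}"
    and reach: "(ji i, s e) \<in> (dedges s t T)\<^sup>*" and e: "e \<in> T"
  shows "e \<notin> E_neg"
proof
  assume "e \<in> E_neg"
  then have "\<pi> e < 0" unfolding Eneg_def by simp
  have acyclic: "acyclic (dedges s t T)"
    using Theta_imp_in_forest(1)[OF T B_subset_N] unfolding in_forest_def by blast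
  have "(ji i, m + 1) \<in> (dedges s t T)\<^sup>*"
    using negative_reach_passes_top[OF ThetaD(1)[OF T] acyclic i reach e refl \<open>\<pi> e < 0\<close>] .
  then have "ji i = m + 1"
    using Theta_F_nodes_separated[OF T B_subset_N F_subset_N _ card_F_le_card_B, of "ji i" "m + 1"] i
    by blast
  then show False using ji_in i top_notin_Nblk by metis
qed

lemma ji_reach_restrict:
  assumes T: "T \<in> Theta E s t N F B" and i: "i \<in> {1..d}"
    and reach: "(ji i, w) \<in> (dedges s t A)\<^sup>*" and "A \<inter> A' \<subseteq> T"
    and outside: "\<And>y. y \<in> A - A' \<Longrightarrow> \<exists>e\<in>T \<inter> E_neg. s e = s y"
  shows "(ji i, w) \<in> (dedges s t (A \<inter> A'))\<^sup>*"
  using reach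
proof (induction rule: rtrancl_induct)
  case (step v w)
  then obtain y where y: "y \<in> A" "s y = v" "t y = w" unfolding dedges_iff by blast
  have "(ji i, v) \<in> (dedges s t T)\<^sup>*"
    using step.IH rtrancl_mono[OF dedges_mono[OF \<open>A \<inter> A' \<subseteq> T\<close>]] by blast
  then have "y \<in> A'" using outside[of y] ji_reach_not_negative[OF T i] y by fastforce
  then have "(v, w) \<in> dedges s t (A \<inter> A')" using y unfolding dedges_iff by blast
  with step.IH show ?case by (rule rtrancl_into_rtrancl)
qed simp

lemma in_forest_Theta_transfer:
  assumes Z: "Z \<in> Theta E s t N F B" and T: "in_forest s t E N B T"
    and transfer: "\<And>i r. i \<in> {1..d} \<Longrightarrow> (ji i, r) \<in> (dedges s t Z)\<^sup>* \<Longrightarrow>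
      (ji i, r) \<in> (dedges s t T)\<^sup>*"
  shows "T \<in> Theta E s t N F B"
proof -
  have "\<exists>f\<in>F. (f, r) \<in> (dedges s t T)\<^sup>*" if "r \<in> B" for r
  proof (cases "r = m + 1 \<or> (m + 1 \<notin> B \<and> r \<in> Nblk ms d 0)")
    case True
    then show ?thesis using top_reaches_root[OF T _ that] by blast
  next
    case False
    then show ?thesis using ji_reaches_root[OF Z that] transfer by blast
  qed
  then show ?thesis using in_forest_imp_Theta[OF T B_subset_N F_subset_N] by blast
qed

end

section \<open>The fibres of \<open>\<psi>\<^sub>F\<close>\<close>

locale Lambda_fibre = block_P_graph +
  fixes \<zeta>
  assumes \<zeta>_Lambda: "\<zeta> \<in> Lambda E s t \<pi> \<mu> {1..mtot ms d + 1} (ji ` {1..d} \<union> {mtot ms d + 1})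
    (insert ell Bt)"
begin

lemma \<zeta>_Theta: "\<zeta> \<in> Theta E s t N F B"
  using \<zeta>_Lambda unfolding Lambda_def by blast

lemma \<zeta>_EFfam: "EFfam E s t \<pi> \<mu> N F B \<zeta> = {{}}"
  using \<zeta>_Lambda unfolding Lambda_def by blast

lemma \<zeta>_in_forest: "in_forest s t E N B \<zeta>"
  using Theta_imp_in_forest(1)[OF \<zeta>_Theta B_subset_N] .

lemma \<zeta>_subset: "\<zeta> \<subseteq> E"
  using ThetaD(1)[OF \<zeta>_Theta] .

lemma preimage_subset:
  "{Z \<in> Theta E s t N F B. psiF E s t \<pi> \<mu> N F B Z = \<zeta>}
    \<subseteq> {X \<union> (\<zeta> \<inter> E_pos) | X. X \<in> odot (\<zeta> \<inter> E_neg) (\<lambda>e. insert e (\<mu> e))}"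
proof
  fix Z assume "Z \<in> {Z \<in> Theta E s t N F B. psiF E s t \<pi> \<mu> N F B Z = \<zeta>}"
  then have Z: "Z \<in> Theta E s t N F B" and psi: "psiF E s t \<pi> \<mu> N F B Z = \<zeta>" by auto
  let ?M = "EFmax E s t \<pi> \<mu> N F B Z"
  have "Z \<subseteq> E" "inj_on s Z"
    using Theta_imp_in_forest(1)[OF Z B_subset_N] unfolding in_forest_def by auto
  moreover have "?M \<subseteq> Z \<inter> im_mu" unfolding EFmax_def EFfam_def by (rule Union_least) blast
  moreover have "\<zeta> = (Z - ?M) \<union> mu_star ` ?M" using psi unfolding psiF_def by simp
  ultimately obtain X where "X \<in> odot (\<zeta> \<inter> E_neg) (\<lambda>e. insert e (\<mu> e))" "Z = X \<union> (\<zeta> \<inter> E_pos)"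
    using exchange_back by blast
  then show "Z \<in> {X \<union> (\<zeta> \<inter> E_pos) | X. X \<in> odot (\<zeta> \<inter> E_neg) (\<lambda>e. insert e (\<mu> e))}"
    by blast
qed

end

locale Lambda_choice = Lambda_fibre +
  fixes fc
  assumes fc: "\<forall>e\<in>\<zeta> \<inter> Eneg E \<pi>. fc e \<in> insert e (\<mu> e)"
begin

definition replaced where "replaced = {e \<in> \<zeta> \<inter> E_neg. fc e \<noteq> e}"

definition chosen where "chosen = fc ` (\<zeta> \<inter> E_neg) \<union> (\<zeta> \<inter> E_pos)"

lemma replaced_subset: "replaced \<subseteq> \<zeta> \<inter> E_neg"
  unfolding replaced_def by blast

lemma fc_replaced: "e \<in> replaced \<Longrightarrow> fc e \<in> \<mu> e"
  using fc unfolding replaced_def by blast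

lemma source_fc: "e \<in> replaced \<Longrightarrow> s (fc e) = s e"
  using fc_replaced replaced_subset mu_source by blast

lemma fc_replaced_im_mu: "e \<in> replaced \<Longrightarrow> fc e \<in> im_mu"
  using fc_replaced replaced_subset unfolding immu_def by blast

lemma mu_star_fc: "e \<in> replaced \<Longrightarrow> mu_star (fc e) = e"
  using fc_replaced replaced_subset mu_star_eq by blast

lemma fc_replaced_notin_\<zeta>: "e \<in> replaced \<Longrightarrow> fc e \<notin> \<zeta>"
proof
  assume e: "e \<in> replaced" and "fc e \<in> \<zeta>"
  then have "fc e = e"
    using inj_onD[of s \<zeta> "fc e" e] source_fc[OF e] \<zeta>_in_forest replaced_subset e
    unfolding in_forest_def by blast
  then show False using e unfolding replaced_def by blast
qed

lemma chosen_eq: "chosen = (\<zeta> - replaced) \<union> fc ` replaced"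
proof -
  have "fc ` (\<zeta> \<inter> E_neg) = (\<zeta> \<inter> E_neg - replaced) \<union> fc ` replaced"
    unfolding replaced_def by force
  moreover have "\<zeta> = (\<zeta> \<inter> E_neg) \<union> (\<zeta> \<inter> E_pos)" using \<zeta>_subset E_eq by blast
  moreover have "replaced \<inter> E_pos = {}" using replaced_subset Epos_Eneg_disjoint by blast
  ultimately show ?thesis unfolding chosen_def by blast
qed

lemma chosen_in_forest: "in_forest s t E N B chosen"
proof -
  have \<zeta>: "\<zeta> \<subseteq> E" "s ` \<zeta> = N - B" "inj_on s \<zeta>" "acyclic (dedges s t \<zeta>)"
    using \<zeta>_in_forest unfolding in_forest_def by auto
  have "replaced \<subseteq> \<zeta>" using replaced_subset by blast
  have "fc ` replaced \<subseteq> E" using fc_replaced_im_mu im_mu_subset_Epos unfolding Epos_def by blast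
  then have "chosen \<subseteq> E" using \<zeta>(1) unfolding chosen_eq by blast
  moreover have "s ` chosen = N - B"
    unfolding chosen_eq using exchange_sources[where g = fc and s = s, OF \<open>replaced \<subseteq> \<zeta>\<close> source_fc] \<zeta>(2) by simp
  moreover have "inj_on s chosen"
    unfolding chosen_eq using exchange_inj_on_source[where g = fc and s = s, OF \<zeta>(3) \<open>replaced \<subseteq> \<zeta>\<close> source_fc] .
  moreover have "acyclic (dedges s t chosen)"
    unfolding chosen_eq
    using acyclic_exchange_mu[OF \<zeta>(1) finite_subset[OF \<zeta>(1) finite_E] \<zeta>(4) replaced_subset fc_replaced] .
  ultimately show ?thesis unfolding in_forest_def by blast
qed

lemma chosen_Theta: "chosen \<in> Theta E s t N F B"
proof (rule in_forest_Theta_transfer[OF \<zeta>_Theta chosen_in_forest])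
  fix i r assume i: "i \<in> {1..d}" and reach: "(ji i, r) \<in> (dedges s t \<zeta>)\<^sup>*"
  have "y \<in> replaced" if "y \<in> \<zeta> - chosen" for y
    using that unfolding chosen_eq by blast
  then have "\<exists>e\<in>\<zeta> \<inter> E_neg. s e = s y" if "y \<in> \<zeta> - chosen" for y
    using that replaced_subset by blast
  then have "(ji i, r) \<in> (dedges s t (\<zeta> \<inter> chosen))\<^sup>*"
    using ji_reach_restrict[OF \<zeta>_Theta i reach, of chosen] by blast
  then show "(ji i, r) \<in> (dedges s t chosen)\<^sup>*"
    using rtrancl_mono[OF dedges_mono[of "\<zeta> \<inter> chosen" chosen]] by blast
qed

lemma replacements_EFfam: "fc ` replaced \<in> EFfam E s t \<pi> \<mu> N F B chosen"
proof -
  have "fc ` replaced \<subseteq> chosen \<inter> im_mu" using fc_replaced_im_mu chosen_eq by blast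
  moreover have "(chosen - fc ` replaced) \<union> mu_star ` fc ` replaced = \<zeta>"
  proof -
    have "chosen - fc ` replaced = \<zeta> - replaced"
      unfolding chosen_eq using fc_replaced_notin_\<zeta> by blast
    moreover have "mu_star ` fc ` replaced = replaced"
      using mu_star_fc by (simp add: image_image)
    ultimately show ?thesis using replaced_subset by blast
  qed
  ultimately show ?thesis unfolding EFfam_def using \<zeta>_Theta by simp
qed

text \<open>Maximality of the replacements: any other admissible exchange \<open>X\<close> on \<open>chosen\<close> would yield
  a nonempty admissible exchange on \<open>\<zeta>\<close>, which \<open>\<zeta> \<in> \<Lambda>\<close> forbids.\<close>

context
  fixes X assumes X: "X \<in> EFfam E s t \<pi> \<mu> N F B chosen"
begin

definition extra where "extra = X - fc ` replaced"

definition exchanged where "exchanged = (chosen - X) \<union> mu_star ` X"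

definition \<zeta>_exchanged where "\<zeta>_exchanged = (\<zeta> - extra) \<union> mu_star ` extra"

lemma exchanged_Theta: "exchanged \<in> Theta E s t N F B"
  using X unfolding EFfam_def exchanged_def by blast

lemma extra_subset: "extra \<subseteq> \<zeta> - replaced" "extra \<subseteq> im_mu"
  using X unfolding EFfam_def extra_def chosen_eq by auto

lemma extra_facts:
  assumes "g \<in> extra"
  shows "s (mu_star g) = s g" "mu_star g \<in> E_neg" "mu_star g \<in> exchanged"
  using source_mu_star mu_star_in_Eneg extra_subset(2) assms
  unfolding exchanged_def extra_def by blast+

lemma unexchanged_subset: "\<zeta> - replaced - extra \<subseteq> exchanged \<inter> \<zeta>_exchanged"
proof -
  have "X \<subseteq> extra \<union> fc ` replaced" unfolding extra_def by blast
  then have "(\<zeta> - replaced - extra) \<inter> X = {}" using fc_replaced_notin_\<zeta> by blast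
  then show ?thesis unfolding exchanged_def \<zeta>_exchanged_def chosen_eq by blast
qed

lemma \<zeta>_exchanged_in_forest: "in_forest s t E N B \<zeta>_exchanged"
proof -
  have \<zeta>: "\<zeta> \<subseteq> E" "s ` \<zeta> = N - B" "inj_on s \<zeta>" "acyclic (dedges s t \<zeta>)"
    using \<zeta>_in_forest unfolding in_forest_def by auto
  have "extra \<subseteq> \<zeta>" using extra_subset by blast
  have "\<zeta>_exchanged \<subseteq> E"
    using \<zeta>(1) extra_facts(2) Eneg_subset unfolding \<zeta>_exchanged_def by blast
  moreover have "s ` \<zeta>_exchanged = N - B"
    unfolding \<zeta>_exchanged_def
    using exchange_sources[where g = mu_star and s = s, OF \<open>extra \<subseteq> \<zeta>\<close> extra_facts(1)] \<zeta>(2) by simp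
  moreover have "inj_on s \<zeta>_exchanged"
    unfolding \<zeta>_exchanged_def
    using exchange_inj_on_source[where g = mu_star and s = s, OF \<zeta>(3) \<open>extra \<subseteq> \<zeta>\<close> extra_facts(1)] .
  moreover have "acyclic (dedges s t \<zeta>_exchanged)"
  proof (rule acyclic_one_negative[OF _ _ \<open>\<zeta>_exchanged \<subseteq> E\<close> \<zeta>(4)])
    show "\<zeta>_exchanged \<subseteq> \<zeta> \<union> (exchanged \<inter> E_neg)"
      using extra_facts(2,3) unfolding \<zeta>_exchanged_def by blast
    have "\<zeta>_exchanged \<inter> E_pos \<subseteq> \<zeta> - replaced - extra"
      using extra_facts(2) replaced_subset Epos_Eneg_disjoint unfolding \<zeta>_exchanged_def by blast
    then show "\<zeta>_exchanged \<inter> E_pos \<subseteq> exchanged" using unexchanged_subset by blast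
    show "acyclic (dedges s t exchanged)"
      using Theta_imp_in_forest(1)[OF exchanged_Theta B_subset_N] unfolding in_forest_def by blast
  qed
  ultimately show ?thesis unfolding in_forest_def by blast
qed

lemma \<zeta>_exchanged_Theta: "\<zeta>_exchanged \<in> Theta E s t N F B"
proof (rule in_forest_Theta_transfer[OF \<zeta>_Theta \<zeta>_exchanged_in_forest])
  fix i r assume i: "i \<in> {1..d}" and reach: "(ji i, r) \<in> (dedges s t \<zeta>)\<^sup>*"
  have "\<exists>e\<in>\<zeta> \<inter> E_neg. s e = s y" if "y \<in> \<zeta> - (\<zeta> - replaced)" for y
    using that replaced_subset by blast
  then have "(ji i, r) \<in> (dedges s t (\<zeta> - replaced))\<^sup>*"
    using ji_reach_restrict[OF \<zeta>_Theta i reach, of "\<zeta> - replaced"] by (simp add: Int_absorb1)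
  moreover have "\<exists>e\<in>exchanged \<inter> E_neg. s e = s y"
    if "y \<in> (\<zeta> - replaced) - (exchanged \<inter> \<zeta>_exchanged)" for y
  proof -
    have "y \<in> extra" using that unexchanged_subset by blast
    then show ?thesis using extra_facts[OF \<open>y \<in> extra\<close>] by blast
  qed
  ultimately have "(ji i, r) \<in> (dedges s t ((\<zeta> - replaced) \<inter> (exchanged \<inter> \<zeta>_exchanged)))\<^sup>*"
    using ji_reach_restrict[OF exchanged_Theta i] by blast
  moreover have "(\<zeta> - replaced) \<inter> (exchanged \<inter> \<zeta>_exchanged) \<subseteq> \<zeta>_exchanged" by blast
  ultimately show "(ji i, r) \<in> (dedges s t \<zeta>_exchanged)\<^sup>*"
    using rtrancl_mono[OF dedges_mono] by blast
qed

lemma EFfam_chosen_subset: "X \<subseteq> fc ` replaced"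
proof -
  have "extra \<in> EFfam E s t \<pi> \<mu> N F B \<zeta>"
    using \<zeta>_exchanged_Theta extra_subset unfolding EFfam_def \<zeta>_exchanged_def by blast
  then have "extra = {}" using \<zeta>_EFfam by blast
  then show ?thesis unfolding extra_def by blast
qed

end

lemma EFmax_chosen: "EFmax E s t \<pi> \<mu> N F B chosen = fc ` replaced"
proof -
  show ?thesis unfolding EFmax_def using EFfam_chosen_subset replacements_EFfam by blast
qed

lemma psiF_chosen: "psiF E s t \<pi> \<mu> N F B chosen = \<zeta>"
proof -
  have "chosen - fc ` replaced = \<zeta> - replaced"
    unfolding chosen_eq using fc_replaced_notin_\<zeta> by blast
  moreover have "mu_star ` fc ` replaced = replaced"
    using mu_star_fc by (simp add: image_image)
  ultimately show ?thesis unfolding psiF_def EFmax_chosen using replaced_subset by blast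
qed

end

context Lambda_fibre
begin

theorem psiF_fibre:
  "{Z \<in> Theta E s t N F B. psiF E s t \<pi> \<mu> N F B Z = \<zeta>}
    = {X \<union> (\<zeta> \<inter> E_pos) | X. X \<in> odot (\<zeta> \<inter> E_neg) (\<lambda>e. insert e (\<mu> e))}"
proof
  show "{X \<union> (\<zeta> \<inter> E_pos) | X. X \<in> odot (\<zeta> \<inter> E_neg) (\<lambda>e. insert e (\<mu> e))}
    \<subseteq> {Z \<in> Theta E s t N F B. psiF E s t \<pi> \<mu> N F B Z = \<zeta>}"
  proof
    fix Z assume "Z \<in> {X \<union> (\<zeta> \<inter> E_pos) | X. X \<in> odot (\<zeta> \<inter> E_neg) (\<lambda>e. insert e (\<mu> e))}"
    then obtain fc where Z: "Z = fc ` (\<zeta> \<inter> E_neg) \<union> (\<zeta> \<inter> E_pos)"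
      and fc: "\<forall>e\<in>\<zeta> \<inter> E_neg. fc e \<in> insert e (\<mu> e)"
      unfolding odot_def by blast
    interpret Lambda_choice E s t \<pi> \<mu> d ms ji k ell Bt \<zeta> fc
      by unfold_locales (rule fc)
    show "Z \<in> {Z \<in> Theta E s t N F B. psiF E s t \<pi> \<mu> N F B Z = \<zeta>}"
      using chosen_Theta psiF_chosen Z unfolding chosen_def by simp
  qed
qed (rule preimage_subset)

end

theorem lemma5p4:
  fixes d :: nat and ms :: "nat \<Rightarrow> nat"
    and A :: "nat \<Rightarrow> nat \<Rightarrow> 'r::ordered_comm_ring" and b :: "nat \<Rightarrow> 'r"
    and ji :: "nat \<Rightarrow> nat"
    and E :: "'e set" and s t :: "'e \<Rightarrow> nat" and \<pi> :: "'e \<Rightarrow> 'r" and \<mu> :: "'e \<Rightarrow> 'e set"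
    and k ell :: nat and Bt :: "nat set" and \<zeta> :: "'e set"
  defines "m \<equiv> mtot ms d"
  defines "N \<equiv> {1..m + 1}"
  defines "F \<equiv> ji ` {1..d} \<union> {m + 1}"
  defines "B \<equiv> insert ell Bt"
  (* standing assumptions on (A | b) *)
  assumes A_block: "\<forall>i\<in>{1..d}. \<forall>r\<in>Nblk ms d i. \<forall>c\<in>{1..m} - Nblk ms d i. A r c = 0"
    and b_block: "\<forall>i\<in>{1..d}. card {r \<in> Nblk ms d i. b r \<noteq> 0} \<le> 1"
    and ji_in: "\<forall>i\<in>{1..d}. ji i \<in> Nblk ms d i"
    and b_zero: "\<forall>j\<in>{1..m - ms 0}. j \<notin> ji ` {1..d} \<longrightarrow> b j = 0"
  (* the multidigraph *)
    and fin: "finite E"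
    and ends: "\<forall>e\<in>E. s e \<in> N \<and> t e \<in> N"
    and noloop: "\<forall>e\<in>E. s e \<noteq> t e"
  (* A-compatibility *)
    and compat1: "\<forall>e\<in>E. \<forall>i\<in>{0..d}. \<forall>j\<in>{1..d}. i \<noteq> j \<longrightarrow>
                    \<not> (s e \<in> Nblk ms d i \<and> t e \<in> Nblk ms d j)"
    and compat2: "\<forall>l\<in>N - F. \<forall>j\<in>N. lap E s t \<pi> N l j = (if j \<le> m then A l j else b l)"
  (* P-graph *)
    and P: "Pgraph E s t \<pi> \<mu>"
  (* condition ( * ) *)
    and star: "\<forall>l'\<in>{1..m}. \<forall>i\<in>{1..d}. \<forall>es.
                 set es \<subseteq> E \<and> dpath s t es (ji i) l' \<and> (\<exists>e\<in>set es. \<pi> e < 0)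
                 \<longrightarrow> m + 1 \<in> pathnodes s t es"
    and k: "k \<in> {1..d + 1}"
    and Bt: "Bt \<in> odot ({1..d + 1} - {k}) (Nblk ms d)"
    and l: "ell \<in> N - Bt"
    and zeta: "\<zeta> \<in> Lambda E s t \<pi> \<mu> N F B"
  shows "{Z \<in> Theta E s t N F B. psiF E s t \<pi> \<mu> N F B Z = \<zeta>}
         = {X \<union> (\<zeta> \<inter> Epos E \<pi>) | X. X \<in> odot (\<zeta> \<inter> Eneg E \<pi>) (\<lambda>e. insert e (\<mu> e))}"
proof -
  interpret Lambda_fibre E s t \<pi> \<mu> d ms ji k ell Bt \<zeta>
    by unfold_locales
      (use fin ends P ji_in compat1 star k Bt l zeta in \<open>simp_all add: m_def N_def F_def B_def\<close>)
  show ?thesis unfolding m_def N_def F_def B_def by (rule psiF_fibre)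
qed

end
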